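(* Let $n=p+q$, let $h^1,\dots,h^n:\mathbb{R}^{p,q}\to\mathcal{C}\ell_{\circledS}(p,q)$ be a Clifford field vector and $C_1,\dots,C_n:\mathbb{R}^{p,q}\to\mathcal{C}\ell_{\circledS}(p,q)$ (all with continuous partial derivatives up to second order) satisfying $\partial_\mu h_\rho-[C_\mu,h_\rho]=0$ for all $\mu,\rho$. Let $\sigma,\varepsilon\in\mathbb{C}$ with $\varepsilon=4(n-1)\sigma^3$. Define $B_\mu=\sigma h_\mu+C_\mu$ and $G_{\mu\nu}=\partial_\mu B_\nu-\partial_\nu B_\mu-[B_\mu,B_\nu]$. Then $B_\mu\in\mathcal{C}\ell_{\circledS}(p,q)$ and the Yang–Mills equations $$\partial_\mu B_\nu-\partial_\nu B_\mu-[B_\mu,B_\nu]=G_{\mu\nu},\qquad \partial_\mu G^{\mu\nu}-[B_\mu,G^{\mu\nu}]=\varepsilon h^\nu\quad(\nu=1,\dots,n)$$ hold, where $G^{\mu\nu}=\eta^{\mu\alpha}\eta^{\nu\beta}G_{\alpha\beta}$ and summation over $\mu$ is implied.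
   Context: $\mathbb{R}^{p,q}$ is $\mathbb{R}^n$ with Cartesian coordinates $x^\mu$, $\partial_\mu=\partial/\partial x^\mu$, metric $\eta=(\eta_{\mu\nu})=(\eta^{\mu\nu})=\mathrm{diag}(1,\dots,1,-1,\dots,-1)$ ($p$ ones, $q$ minus ones); indices are lowered/raised with $\eta$ (e.g. $h_\mu=\eta_{\mu\nu}h^\nu$) and Einstein summation is used. $\mathcal{C}\ell(p,q)$ is the complex Clifford algebra with identity $e$ and generators $e^1,\dots,e^n$, $e^ae^b+e^be^a=2\eta^{ab}e$, with basis $e$, $e^{a_1\dots a_k}=e^{a_1}\cdots e^{a_k}$ ($a_1<\dots<a_k$); functions into it are differentiated coefficientwise. $[U,V]=UV-VU$. $\mathrm{Tr}(U)$ is the coefficient of $e$. The center is spanned by $e$ for even $n$ and by $e,e^{1\dots n}$ for odd $n$; $\mathcal{C}\ell_{\circledS}(p,q)$ is the set of elements with zero projection onto the center. A Clifford field vector is a collection $h^\mu:\mathbb{R}^{p,q}\to\mathcal{C}\ell(p,q)$, $\mu=1,\dots,n$, with $h^\mu h^\nu+h^\nu h^\mu=2\eta^{\mu\nu}e$ and $\mathrm{Tr}(h^1\cdots h^n)=0$ at every point. *)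

theory Defs
  imports "HOL-Analysis.Analysis"
begin

text \<open>Points of R^{p,q} are
  functions x :: nat => real with x i = 0 for i outside {1..n}; the space carries the
  subspace topology of the product topology (= the Euclidean topology).
  An element of the complex Clifford algebra Cl(p,q) is represented by its coefficient
  function U :: nat set => complex on the basis e^A, A a subset of {1..n}
  (e^{} = e, e^{a1..ak} = e^{a1}...e^{ak} for a1 < ... < ak), with U A = 0 for A not
  a subset of {1..n}.\<close>

type_synonym cl = "nat set \<Rightarrow> complex"
type_synonym point = "nat \<Rightarrow> real"

definition eta :: "nat \<Rightarrow> nat \<Rightarrow> nat \<Rightarrow> complex" where
  "eta p a b = (if a = b then (if a \<le> p then 1 else -1) else 0)"

definition Rpq :: "nat \<Rightarrow> nat \<Rightarrow> point set" where
  "Rpq p q = {x. \<forall>i. i \<notin> {1..p+q} \<longrightarrow> x i = 0}"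

definition cl_carrier :: "nat \<Rightarrow> nat \<Rightarrow> cl set" where
  "cl_carrier p q = {U. \<forall>A. \<not> A \<subseteq> {1..p+q} \<longrightarrow> U A = 0}"

text \<open>Sign in the product of basis elements: e^A e^B = clsign A B e^{A symdiff B}.\<close>
definition clsign :: "nat \<Rightarrow> nat set \<Rightarrow> nat set \<Rightarrow> complex" where
  "clsign p A B = (-1) ^ card {(a, b). a \<in> A \<and> b \<in> B \<and> b < a} * (\<Prod>c\<in>A \<inter> B. eta p c c)"

definition clmul :: "nat \<Rightarrow> nat \<Rightarrow> cl \<Rightarrow> cl \<Rightarrow> cl" where
  "clmul p q U V = (\<lambda>C. \<Sum>A\<in>Pow {1..p+q}. \<Sum>B\<in>Pow {1..p+q}.
      if (A - B) \<union> (B - A) = C then clsign p A B * U A * V B else 0)"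

definition clone :: cl where
  "clone = (\<lambda>A. if A = {} then 1 else 0)"

definition clgen :: "nat \<Rightarrow> cl" where
  "clgen a = (\<lambda>A. if A = {a} then 1 else 0)"

definition cladd :: "cl \<Rightarrow> cl \<Rightarrow> cl" where
  "cladd U V = (\<lambda>A. U A + V A)"

definition clsub :: "cl \<Rightarrow> cl \<Rightarrow> cl" where
  "clsub U V = (\<lambda>A. U A - V A)"

definition clscale :: "complex \<Rightarrow> cl \<Rightarrow> cl" where
  "clscale c U = (\<lambda>A. c * U A)"

definition comm :: "nat \<Rightarrow> nat \<Rightarrow> cl \<Rightarrow> cl \<Rightarrow> cl" where
  "comm p q U V = clsub (clmul p q U V) (clmul p q V U)"

definition Tr :: "cl \<Rightarrow> complex" where
  "Tr U = U {}"

definition clprod :: "nat \<Rightarrow> nat \<Rightarrow> cl list \<Rightarrow> cl" where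
  "clprod p q Us = foldr (clmul p q) Us clone"

text \<open>Cl_S(p,q): elements of Cl(p,q) with zero projection onto the center
  (center spanned by e for even n, by e and e^{1..n} for odd n).\<close>
definition cl_S :: "nat \<Rightarrow> nat \<Rightarrow> cl set" where
  "cl_S p q = {U \<in> cl_carrier p q. U {} = 0 \<and> (odd (p+q) \<longrightarrow> U {1..p+q} = 0)}"

definition has_pd :: "nat \<Rightarrow> (point \<Rightarrow> complex) \<Rightarrow> point \<Rightarrow> bool" where
  "has_pd mu f x = ((\<lambda>t. f (x(mu := t))) differentiable (at (x mu)))"

definition pd :: "nat \<Rightarrow> (point \<Rightarrow> complex) \<Rightarrow> point \<Rightarrow> complex" where
  "pd mu f x = vector_derivative (\<lambda>t. f (x(mu := t))) (at (x mu))"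

definition cpd :: "nat \<Rightarrow> (point \<Rightarrow> cl) \<Rightarrow> point \<Rightarrow> cl" where
  "cpd mu F x = (\<lambda>A. pd mu (\<lambda>y. F y A) x)"

definition C2_scalar :: "nat \<Rightarrow> nat \<Rightarrow> (point \<Rightarrow> complex) \<Rightarrow> bool" where
  "C2_scalar p q f \<longleftrightarrow>
     continuous_on (Rpq p q) f \<and>
     (\<forall>mu\<in>{1..p+q}. (\<forall>x\<in>Rpq p q. has_pd mu f x) \<and> continuous_on (Rpq p q) (pd mu f)) \<and>
     (\<forall>mu\<in>{1..p+q}. \<forall>nu\<in>{1..p+q}.
        (\<forall>x\<in>Rpq p q. has_pd nu (pd mu f) x) \<and> continuous_on (Rpq p q) (pd nu (pd mu f)))"

definition C2_cl :: "nat \<Rightarrow> nat \<Rightarrow> (point \<Rightarrow> cl) \<Rightarrow> bool" where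
  "C2_cl p q F \<longleftrightarrow> (\<forall>A. C2_scalar p q (\<lambda>x. F x A))"

text \<open>Clifford field vector h^1..h^n (upper indices).\<close>
definition clifford_field_vector :: "nat \<Rightarrow> nat \<Rightarrow> (nat \<Rightarrow> point \<Rightarrow> cl) \<Rightarrow> bool" where
  "clifford_field_vector p q h \<longleftrightarrow>
     (\<forall>x\<in>Rpq p q.
        (\<forall>mu\<in>{1..p+q}. h mu x \<in> cl_carrier p q) \<and>
        (\<forall>mu\<in>{1..p+q}. \<forall>nu\<in>{1..p+q}.
           cladd (clmul p q (h mu x) (h nu x)) (clmul p q (h nu x) (h mu x))
             = clscale (2 * eta p mu nu) clone) \<and>
        Tr (clprod p q (map (\<lambda>mu. h mu x) [1..<p+q+1])) = 0)"

end

theory Submission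
  imports Defs "HOL-Library.Function_Algebras"
begin

text \<open>Write \<open>D\<^sub>\<mu> = \<partial>\<^sub>\<mu> - [C\<^sub>\<mu>, \<cdot>]\<close>, so that the hypothesis says \<open>D\<^sub>\<mu>h = 0\<close>.
  Differentiating once more and using the symmetry of second derivatives and the Jacobi identity
  shows that the curvature \<open>F\<^sub>\<mu>\<^sub>\<nu>\<close> of \<open>C\<close> commutes with every \<open>h\<^sup>\<rho>\<close>. The \<open>h\<^sup>\<rho>\<close> generate the
  algebra: the ordered products \<open>h\<^sup>A\<close>, \<open>A \<subseteq> {1..n}\<close>, are trace-orthogonal, and hence
  \<open>2\<^sup>n\<close> independent elements, because \<open>Tr(h\<^sup>A) = 0\<close> for \<open>A \<noteq> {}\<close> (for \<open>A = {1..n}\<close> this is the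
  hypothesis \<open>Tr(h\<^sup>1\<cdots>h\<^sup>n) = 0\<close>). So \<open>F\<^sub>\<mu>\<^sub>\<nu>\<close> is central, and since it lies in \<open>C\<ell>\<^sub>S(p,q)\<close> it
  vanishes. Consequently \<open>G\<^sub>\<mu>\<^sub>\<nu> = -\<sigma>\<^sup>2[h\<^sub>\<mu>, h\<^sub>\<nu>]\<close>, and since \<open>D\<^sub>\<mu>\<close> annihilates \<open>h\<close>, the covariant
  divergence of \<open>G\<^sup>\<mu>\<^sup>\<nu>\<close> reduces to \<open>\<sigma>\<^sup>3 \<Sum>\<^sub>\<mu> \<eta>\<^sup>\<mu>\<^sup>\<mu>[h\<^sup>\<mu>, [h\<^sup>\<mu>, h\<^sup>\<nu>]] = 4(n-1)\<sigma>\<^sup>3 h\<^sup>\<nu>\<close>.\<close>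

section \<open>Associativity of the Clifford product\<close>

abbreviation symdiff :: "'a set \<Rightarrow> 'a set \<Rightarrow> 'a set" where
  "symdiff A B \<equiv> (A - B) \<union> (B - A)"

lemma prod_symdiff_involutive:
  assumes "finite X" "finite Y" "\<And>x. g x * g x = (1::'b::comm_ring_1)"
  shows "prod g (symdiff X Y) = prod g X * prod g Y"
proof -
  have X: "prod g X = prod g (X - Y) * prod g (X \<inter> Y)"
    using prod.subset_diff[of "X \<inter> Y" X g] assms by (simp add: Diff_Int)
  have Y: "prod g Y = prod g (Y - X) * prod g (X \<inter> Y)"
    using prod.subset_diff[of "X \<inter> Y" Y g] assms by (simp add: Diff_Int Int_commute)
  have square: "prod g (X \<inter> Y) * prod g (X \<inter> Y) = 1"
    by (simp add: prod.distrib[symmetric] assms)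
  have "prod g (symdiff X Y) = prod g (X - Y) * prod g (Y - X)"
    by (rule prod.union_disjoint) (use assms in auto)
  then show ?thesis unfolding X Y
    by (metis (no_types, lifting) square mult.assoc mult.commute mult.right_neutral)
qed

definition inversions :: "nat set \<Rightarrow> nat set \<Rightarrow> (nat \<times> nat) set" where
  "inversions A B = {(a, b). a \<in> A \<and> b \<in> B \<and> b < a}"

lemma finite_inversions: "finite A \<Longrightarrow> finite B \<Longrightarrow> finite (inversions A B)"
  by (rule finite_subset[of _ "A \<times> B"]) (auto simp: inversions_def)

lemma inversions_symdiff_left: "inversions (symdiff A B) E = symdiff (inversions A E) (inversions B E)"
  by (auto simp: inversions_def)

lemma inversions_symdiff_right: "inversions A (symdiff B E) = symdiff (inversions A B) (inversions A E)"
  by (auto simp: inversions_def)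

lemma clsign_eq_inversions:
  "clsign p A B = (\<Prod>_\<in>inversions A B. -1) * (\<Prod>c\<in>A \<inter> B. eta p c c)"
  by (simp add: clsign_def inversions_def)

lemma eta_diag_square: "eta p c c * eta p c c = 1"
  by (simp add: eta_def)

lemma eta_diag_nonzero: "eta p c c \<noteq> 0"
  by (simp add: eta_def)

lemma clsign_nonzero: "clsign p A B \<noteq> 0"
proof -
  have "(\<Prod>c\<in>A \<inter> B. eta p c c) \<noteq> 0"
    by (cases "finite (A \<inter> B)") (auto simp: eta_diag_nonzero)
  then show ?thesis by (simp add: clsign_def)
qed

text \<open>Both sides are products over symmetric differences of inversion sets and of
  intersections, and weights squaring to one are multiplicative on symmetric differences.\<close>
lemma clsign_cocycle:
  assumes "finite A" "finite B" "finite E"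
  shows "clsign p A B * clsign p (symdiff A B) E = clsign p A (symdiff B E) * clsign p B E"
proof -
  have sign: "(-1::complex) ^ card (symdiff X Y) = (-1) ^ card X * (-1) ^ card Y"
    if "finite X" "finite Y" for X Y :: "(nat \<times> nat) set"
    using prod_symdiff_involutive[of X Y "\<lambda>_. -1::complex"] that by simp
  have metric: "(\<Prod>c\<in>symdiff X Y. eta p c c) = (\<Prod>c\<in>X. eta p c c) * (\<Prod>c\<in>Y. eta p c c)"
    if "finite X" "finite Y" for X Y
    by (rule prod_symdiff_involutive) (use that in \<open>auto simp: eta_diag_square\<close>)
  have "symdiff A B \<inter> E = symdiff (A \<inter> E) (B \<inter> E)" "A \<inter> symdiff B E = symdiff (A \<inter> B) (A \<inter> E)"
    by auto
  then show ?thesis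
    unfolding clsign_eq_inversions inversions_symdiff_left inversions_symdiff_right
    using assms by (simp add: sign metric finite_inversions mult_ac)
qed

lemma sum_if_eq_and:
  assumes "finite S"
  shows "(\<Sum>C\<in>S. if a = C \<and> P C then f C else 0) = (if a \<in> S \<and> P a then f a else (0::'b::comm_monoid_add))"
proof -
  have "(\<Sum>C\<in>S. if a = C \<and> P C then f C else 0) = (\<Sum>C\<in>S. if a = C then (if P C then f C else 0) else 0)"
    by (rule sum.cong) auto
  also have "\<dots> = (if a \<in> S then (if P a then f a else 0) else 0)"
    by (simp add: sum.delta' assms)
  finally show ?thesis by auto
qed

lemma sum_rotate3:
  "(\<Sum>x\<in>S. \<Sum>y\<in>S. \<Sum>z\<in>S. f x y z) = (\<Sum>y\<in>S. \<Sum>z\<in>S. \<Sum>x\<in>S. f x y z)"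
proof -
  have "(\<Sum>x\<in>S. \<Sum>y\<in>S. \<Sum>z\<in>S. f x y z) = (\<Sum>y\<in>S. \<Sum>x\<in>S. \<Sum>z\<in>S. f x y z)"
    by (rule sum.swap)
  also have "\<dots> = (\<Sum>y\<in>S. \<Sum>z\<in>S. \<Sum>x\<in>S. f x y z)"
    by (rule sum.cong[OF refl], rule sum.swap)
  finally show ?thesis .
qed

lemma sum_reverse3:
  "(\<Sum>x\<in>S. \<Sum>y\<in>S. \<Sum>z\<in>S. f x y z) = (\<Sum>z\<in>S. \<Sum>y\<in>S. \<Sum>x\<in>S. f x y z)"
proof -
  have "(\<Sum>x\<in>S. \<Sum>y\<in>S. \<Sum>z\<in>S. f x y z) = (\<Sum>y\<in>S. \<Sum>z\<in>S. \<Sum>x\<in>S. f x y z)"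
    by (rule sum_rotate3)
  also have "\<dots> = (\<Sum>z\<in>S. \<Sum>y\<in>S. \<Sum>x\<in>S. f x y z)"
    by (rule sum.swap)
  finally show ?thesis .
qed

lemma sum_reorder4:
  "(\<Sum>w\<in>S. \<Sum>x\<in>S. \<Sum>y\<in>S. \<Sum>z\<in>S. f w x y z) = (\<Sum>y\<in>S. \<Sum>z\<in>S. \<Sum>x\<in>S. \<Sum>w\<in>S. f w x y z)"
proof -
  have "(\<Sum>w\<in>S. \<Sum>x\<in>S. \<Sum>y\<in>S. \<Sum>z\<in>S. f w x y z) = (\<Sum>w\<in>S. \<Sum>y\<in>S. \<Sum>x\<in>S. \<Sum>z\<in>S. f w x y z)"
    by (rule sum.cong[OF refl], rule sum.swap)
  also have "\<dots> = (\<Sum>y\<in>S. \<Sum>w\<in>S. \<Sum>x\<in>S. \<Sum>z\<in>S. f w x y z)"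
    by (rule sum.swap)
  also have "\<dots> = (\<Sum>y\<in>S. \<Sum>z\<in>S. \<Sum>x\<in>S. \<Sum>w\<in>S. f w x y z)"
    by (rule sum.cong[OF refl], rule sum_reverse3)
  finally show ?thesis .
qed

lemma clmul_clmul_left_apply:
  "clmul p q (clmul p q U V) W D = (\<Sum>A\<in>Pow {1..p+q}. \<Sum>B\<in>Pow {1..p+q}. \<Sum>E\<in>Pow {1..p+q}.
      if symdiff (symdiff A B) E = D
      then clsign p (symdiff A B) E * clsign p A B * U A * V B * W E else 0)"
proof -
  let ?P = "Pow {1..p+q}"
  let ?s = "clsign p"
  have "clmul p q (clmul p q U V) W D = (\<Sum>C\<in>?P. \<Sum>E\<in>?P. \<Sum>A\<in>?P. \<Sum>B\<in>?P.
        if symdiff A B = C \<and> symdiff C E = D then ?s C E * ?s A B * U A * V B * W E else 0)"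
    unfolding clmul_def by (auto simp: sum_distrib_left sum_distrib_right mult_ac intro!: sum.cong)
  also have "\<dots> = (\<Sum>A\<in>?P. \<Sum>B\<in>?P. \<Sum>E\<in>?P. \<Sum>C\<in>?P.
        if symdiff A B = C \<and> symdiff C E = D then ?s C E * ?s A B * U A * V B * W E else 0)"
    by (rule sum_reorder4)
  also have "\<dots> = (\<Sum>A\<in>?P. \<Sum>B\<in>?P. \<Sum>E\<in>?P.
        if symdiff (symdiff A B) E = D then ?s (symdiff A B) E * ?s A B * U A * V B * W E else 0)"
    by (intro sum.cong refl, subst sum_if_eq_and) auto
  finally show ?thesis .
qed

lemma clmul_clmul_right_apply:
  "clmul p q U (clmul p q V W) D = (\<Sum>A\<in>Pow {1..p+q}. \<Sum>B\<in>Pow {1..p+q}. \<Sum>E\<in>Pow {1..p+q}.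
      if symdiff A (symdiff B E) = D
      then clsign p A (symdiff B E) * clsign p B E * U A * V B * W E else 0)"
proof -
  let ?P = "Pow {1..p+q}"
  let ?s = "clsign p"
  have "clmul p q U (clmul p q V W) D = (\<Sum>A\<in>?P. \<Sum>F\<in>?P. \<Sum>B\<in>?P. \<Sum>E\<in>?P.
        if symdiff B E = F \<and> symdiff A F = D then ?s A F * ?s B E * U A * V B * W E else 0)"
    unfolding clmul_def by (auto simp: sum_distrib_left sum_distrib_right mult_ac intro!: sum.cong)
  also have "\<dots> = (\<Sum>A\<in>?P. \<Sum>B\<in>?P. \<Sum>E\<in>?P. \<Sum>F\<in>?P.
        if symdiff B E = F \<and> symdiff A F = D then ?s A F * ?s B E * U A * V B * W E else 0)"
    by (rule sum.cong[OF refl], rule sum_rotate3)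
  also have "\<dots> = (\<Sum>A\<in>?P. \<Sum>B\<in>?P. \<Sum>E\<in>?P.
        if symdiff A (symdiff B E) = D then ?s A (symdiff B E) * ?s B E * U A * V B * W E else 0)"
    by (intro sum.cong refl, subst sum_if_eq_and) auto
  finally show ?thesis .
qed

lemma clmul_assoc: "clmul p q (clmul p q U V) W = clmul p q U (clmul p q V W)"
proof (rule ext)
  fix D
  have "symdiff A (symdiff B E) = symdiff (symdiff A B) E" for A B E :: "nat set"
    by auto
  moreover have "clsign p A (symdiff B E) * clsign p B E = clsign p (symdiff A B) E * clsign p A B"
    if "A \<in> Pow {1..p+q}" "B \<in> Pow {1..p+q}" "E \<in> Pow {1..p+q}" for A B E
  proof -
    have "finite A" "finite B" "finite E" using that by (auto intro: finite_subset)
    then show ?thesis using clsign_cocycle[of A B E p] by (simp add: mult_ac)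
  qed
  ultimately show "clmul p q (clmul p q U V) W D = clmul p q U (clmul p q V W) D"
    unfolding clmul_clmul_left_apply clmul_clmul_right_apply by (intro sum.cong refl) simp
qed

lemma cladd_clsub_eq: "cladd U V = U + V" "clsub U V = U - V"
  by (auto simp: cladd_def clsub_def fun_eq_iff)

lemma comm_eq: "comm p q U V = clmul p q U V - clmul p q V U"
  by (simp add: comm_def cladd_clsub_eq)

lemma sum_fun_apply: "(\<Sum>v\<in>t. f v) A = (\<Sum>v\<in>t. f v A)"
  by (induction t rule: infinite_finite_induct) auto

lemma clmul_add_left: "clmul p q (U + V) W = clmul p q U W + clmul p q V W"
  unfolding clmul_def by (auto simp: fun_eq_iff sum.distrib[symmetric] algebra_simps intro!: sum.cong)

lemma clmul_add_right: "clmul p q W (U + V) = clmul p q W U + clmul p q W V"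
  unfolding clmul_def by (auto simp: fun_eq_iff sum.distrib[symmetric] algebra_simps intro!: sum.cong)

lemma clmul_diff_left: "clmul p q (U - V) W = clmul p q U W - clmul p q V W"
  unfolding clmul_def by (auto simp: fun_eq_iff sum_subtractf[symmetric] algebra_simps intro!: sum.cong)

lemma clmul_diff_right: "clmul p q W (U - V) = clmul p q W U - clmul p q W V"
  unfolding clmul_def by (auto simp: fun_eq_iff sum_subtractf[symmetric] algebra_simps intro!: sum.cong)

lemma clmul_scale_left: "clmul p q (clscale c U) W = clscale c (clmul p q U W)"
  unfolding clmul_def clscale_def by (auto simp: fun_eq_iff sum_distrib_left algebra_simps intro!: sum.cong)

lemma clmul_scale_right: "clmul p q W (clscale c U) = clscale c (clmul p q W U)"
  unfolding clmul_def clscale_def by (auto simp: fun_eq_iff sum_distrib_left algebra_simps intro!: sum.cong)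

lemma clmul_zero_left [simp]: "clmul p q 0 W = 0"
  using clmul_diff_left[of p q 0 0 W] by simp

lemma clmul_zero_right [simp]: "clmul p q W 0 = 0"
  using clmul_diff_right[of p q W 0 0] by simp

lemma clmul_neg_left: "clmul p q (- U) V = - clmul p q U V"
  using clmul_diff_left[of p q 0 U V] by simp

lemma clmul_neg_right: "clmul p q V (- U) = - clmul p q V U"
  using clmul_diff_right[of p q V 0 U] by simp

lemma clmul_sum_left: "finite T \<Longrightarrow> clmul p q (\<Sum>v\<in>T. f v) W = (\<Sum>v\<in>T. clmul p q (f v) W)"
proof (induction T rule: finite_induct)
  case empty
  then show ?case by (simp only: sum.empty clmul_zero_left)
next
  case (insert x F)
  then show ?case by (simp only: sum.insert[OF insert.hyps] clmul_add_left insert.IH)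
qed

lemma clscale_simps:
  "clscale c (clscale d U) = clscale (c * d) U"
  "clscale 1 U = U"
  "clscale c (U + V) = clscale c U + clscale c V"
  "clscale c (U - V) = clscale c U - clscale c V"
  "clscale c 0 = 0"
  "clscale 0 U = 0"
  "clscale (-c) U = - clscale c U"
  by (auto simp: clscale_def fun_eq_iff algebra_simps)

lemma clmul_carrier: "clmul p q U V \<in> cl_carrier p q"
proof -
  have "symdiff A B \<noteq> D" if "A \<in> Pow {1..p+q}" "B \<in> Pow {1..p+q}" "\<not> D \<subseteq> {1..p+q}" for A B D
    using that by auto
  then show ?thesis unfolding cl_carrier_def clmul_def by (auto intro!: sum.neutral)
qed

lemma clone_carrier: "clone \<in> cl_carrier p q"
  by (auto simp: clone_def cl_carrier_def)

lemma clsign_empty: "clsign p {} B = 1" "clsign p A {} = 1"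
  by (auto simp: clsign_def)

lemma clone_left: "U \<in> cl_carrier p q \<Longrightarrow> clmul p q clone U = U"
proof (rule ext)
  fix D assume U: "U \<in> cl_carrier p q"
  let ?P = "Pow {1..p+q}"
  have "clmul p q clone U D = (\<Sum>A\<in>?P. \<Sum>B\<in>?P. if A = {} then (if B = D then U B else 0) else 0)"
    unfolding clmul_def clone_def by (intro sum.cong refl) (auto simp: clsign_empty)
  also have "\<dots> = (\<Sum>A\<in>?P. if A = {} then (\<Sum>B\<in>?P. if B = D then U B else 0) else 0)"
    by (intro sum.cong refl) auto
  also have "\<dots> = U D"
    using U by (auto simp: sum.delta cl_carrier_def)
  finally show "clmul p q clone U D = U D" .
qed

lemma clone_right: "U \<in> cl_carrier p q \<Longrightarrow> clmul p q U clone = U"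
proof (rule ext)
  fix D assume U: "U \<in> cl_carrier p q"
  let ?P = "Pow {1..p+q}"
  have "clmul p q U clone D = (\<Sum>A\<in>?P. \<Sum>B\<in>?P. if B = {} then (if A = D then U A else 0) else 0)"
    unfolding clmul_def clone_def by (intro sum.cong refl) (auto simp: clsign_empty)
  also have "\<dots> = U D"
    using U by (auto simp: sum.delta cl_carrier_def)
  finally show "clmul p q U clone D = U D" .
qed

lemma Tr_clmul: "Tr (clmul p q U V) = (\<Sum>A\<in>Pow {1..p+q}. clsign p A A * U A * V A)"
proof -
  have "symdiff A B = {} \<longleftrightarrow> A = B" for A B :: "nat set" by auto
  then show ?thesis
    unfolding Tr_def clmul_def by (simp add: sum.delta cong: if_cong)
qed

lemma Tr_clmul_commute: "Tr (clmul p q U V) = Tr (clmul p q V U)"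
  unfolding Tr_clmul by (auto simp: mult_ac intro!: sum.cong)

lemma Tr_simps:
  "Tr (clscale c U) = c * Tr U" "Tr (U + V) = Tr U + Tr V" "Tr (U - V) = Tr U - Tr V"
  "Tr 0 = 0" "Tr clone = 1" "Tr (- U) = - Tr U"
  by (auto simp: Tr_def clscale_def clone_def)

lemma Tr_sum: "Tr (\<Sum>v\<in>T. f v) = (\<Sum>v\<in>T. Tr (f v))"
  by (simp add: Tr_def sum_fun_apply)

section \<open>The centre of the Clifford algebra\<close>

definition clbasis :: "nat set \<Rightarrow> cl" where
  "clbasis S = (\<lambda>A. if A = S then 1 else 0)"

lemma clgen_eq_clbasis: "clgen a = clbasis {a}"
  by (simp add: clgen_def clbasis_def)

lemma clmul_clbasis_left:
  assumes "S \<in> Pow {1..p+q}" "B \<in> Pow {1..p+q}"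
  shows "clmul p q (clbasis S) X (symdiff S B) = clsign p S B * X B"
proof -
  let ?P = "Pow {1..p+q}"
  have inj: "symdiff S B' = symdiff S B \<longleftrightarrow> B' = B" for B' by auto
  have "clmul p q (clbasis S) X (symdiff S B) =
      (\<Sum>A\<in>?P. \<Sum>B'\<in>?P. if A = S then (if B' = B then clsign p S B * X B else 0) else 0)"
    unfolding clmul_def clbasis_def
    by (intro sum.cong refl) (auto simp: inj)
  also have "\<dots> = (\<Sum>A\<in>?P. if A = S then (\<Sum>B'\<in>?P. if B' = B then clsign p S B * X B else 0) else 0)"
    by (intro sum.cong refl) simp
  also have "\<dots> = clsign p S B * X B"
    using assms by (simp add: sum.delta)
  finally show ?thesis .
qed

lemma clmul_clbasis_right:
  assumes "S \<in> Pow {1..p+q}" "B \<in> Pow {1..p+q}"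
  shows "clmul p q X (clbasis S) (symdiff S B) = clsign p B S * X B"
proof -
  let ?P = "Pow {1..p+q}"
  have inj: "symdiff A S = symdiff S B \<longleftrightarrow> A = B" for A by auto
  have "clmul p q X (clbasis S) (symdiff S B) =
      (\<Sum>A\<in>?P. \<Sum>B'\<in>?P. if B' = S then (if A = B then clsign p B S * X B else 0) else 0)"
    unfolding clmul_def clbasis_def
    by (intro sum.cong refl) (auto simp: inj)
  also have "\<dots> = (\<Sum>A\<in>?P. if A = B then clsign p B S * X B else 0)"
    by (intro sum.cong refl) (use assms in \<open>simp add: sum.delta\<close>)
  also have "\<dots> = clsign p B S * X B"
    using assms by (simp add: sum.delta)
  finally show ?thesis .
qed

lemma card_inversions_singleton:
  assumes "finite B"
  shows "card (inversions {a} B) + card (inversions B {a}) = card (B - {a})"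
proof -
  have below: "inversions {a} B = (\<lambda>b. (a, b)) ` {b\<in>B. b < a}"
    and above: "inversions B {a} = (\<lambda>b. (b, a)) ` {b\<in>B. a < b}"
    by (auto simp: inversions_def)
  have "B - {a} = {b\<in>B. b < a} \<union> {b\<in>B. a < b}" by auto
  moreover have "card ({b\<in>B. b < a} \<union> {b\<in>B. a < b}) = card {b\<in>B. b < a} + card {b\<in>B. a < b}"
    by (rule card_Un_disjoint) (use assms in auto)
  ultimately show ?thesis
    unfolding below above by (simp add: card_image inj_on_def)
qed

lemma clsign_singleton_swap:
  assumes "finite B"
  shows "clsign p {a} B = (-1) ^ card (B - {a}) * clsign p B {a}"
proof -
  have "(-1::complex) ^ card (B - {a}) * (-1) ^ card (inversions B {a}) =
      (-1) ^ card (inversions {a} B) * ((-1) ^ card (inversions B {a}) * (-1) ^ card (inversions B {a}))"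
    unfolding card_inversions_singleton[OF assms, of a, symmetric] power_add by (simp only: mult.assoc)
  then have "(-1::complex) ^ card (inversions {a} B) = (-1) ^ card (B - {a}) * (-1) ^ card (inversions B {a})"
    by (simp add: power_mult_distrib[symmetric])
  then show ?thesis
    unfolding clsign_eq_inversions by (simp add: Int_commute mult_ac)
qed

text \<open>Commuting with \<open>e\<^sup>a\<close> kills every coefficient \<open>X B\<close> with \<open>e\<^sup>a e\<^sup>B = - e\<^sup>B e\<^sup>a\<close>.\<close>
lemma coeff_zero_if_commutes_with_clgen:
  assumes commutes: "clmul p q (clgen a) X = clmul p q X (clgen a)" and a: "a \<in> {1..p+q}"
    and B: "B \<in> Pow {1..p+q}" and odd: "odd (card (B - {a}))"
  shows "X B = 0"
proof -
  have S: "{a} \<in> Pow {1..p+q}" using a by auto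
  have "clsign p {a} B * X B = clsign p B {a} * X B"
    using clmul_clbasis_left[OF S B, of X] clmul_clbasis_right[OF S B, of X] commutes
    by (simp only: clgen_eq_clbasis)
  moreover have "clsign p {a} B = - clsign p B {a}"
    using clsign_singleton_swap[of B p a] B odd by (auto intro: finite_subset)
  ultimately have "2 * (clsign p B {a} * X B) = 0" by (simp add: algebra_simps)
  then show ?thesis using clsign_nonzero[of p B "{a}"] by simp
qed

lemma cl_S_commuting_with_clgen_eq_0:
  assumes X: "X \<in> cl_S p q"
    and commutes: "\<forall>a\<in>{1..p+q}. clmul p q (clgen a) X = clmul p q X (clgen a)"
  shows "X = 0"
proof (rule ext)
  fix B
  have odd_witness: "X B = 0" if "a \<in> {1..p+q}" "B \<in> Pow {1..p+q}" "odd (card (B - {a}))" for a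
    using coeff_zero_if_commutes_with_clgen[of p q a X B] commutes that by auto
  show "X B = 0 B"
  proof (cases "B \<in> Pow {1..p+q} \<and> B \<noteq> {}")
    case False
    then show ?thesis using X by (auto simp: cl_S_def cl_carrier_def)
  next
    case True
    then have B: "B \<in> Pow {1..p+q}" "finite B" by (auto intro: finite_subset)
    consider "even (card B)" | "odd (card B)" "B = {1..p+q}" | "odd (card B)" "B \<noteq> {1..p+q}"
      by blast
    then show ?thesis
    proof cases
      case 1
      obtain a where "a \<in> B" using True by auto
      then show ?thesis using odd_witness[of a] 1 B card_gt_0_iff by fastforce
    next
      case 2
      then show ?thesis using X by (auto simp: cl_S_def)
    next
      case 3
      then obtain a where "a \<in> {1..p+q}" "a \<notin> B" using B by blast
      then show ?thesis using odd_witness[of a] 3 B by simp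
    qed
  qed
qed

lemma card_inversions_superset:
  assumes "B \<subseteq> N" "finite N"
  shows "card (inversions N B) + card (inversions B N) = card N * card B - card B"
proof -
  let ?R = "{(a, b). a \<in> N \<and> b \<in> B \<and> a < b}"
  have fB: "finite B" using assms finite_subset by blast
  have flip: "inversions B N = (\<lambda>(a, b). (b, a)) ` ?R"
    by (auto simp: inversions_def image_iff)
  have "card ((\<lambda>(a, b). (b, a)) ` ?R) = card ?R"
    by (rule card_image) (auto simp: inj_on_def)
  moreover have "inversions N B \<union> ?R = (N \<times> B) - (\<lambda>b. (b, b)) ` B"
    using assms by (auto simp: inversions_def)
  moreover have "card (inversions N B \<union> ?R) = card (inversions N B) + card ?R"
    by (rule card_Un_disjoint) (auto simp: inversions_def intro: finite_subset[of _ "N \<times> B"] assms fB)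
  moreover have "card ((N \<times> B) - (\<lambda>b. (b, b)) ` B) = card N * card B - card B"
  proof -
    have "card ((N \<times> B) - (\<lambda>b. (b, b)) ` B) = card (N \<times> B) - card ((\<lambda>b. (b, b)) ` B)"
      by (rule card_Diff_subset) (use assms fB in auto)
    moreover have "card ((\<lambda>b. (b, b)) ` B) = card B"
      by (rule card_image) (auto simp: inj_on_def)
    ultimately show ?thesis by (simp add: card_cartesian_product)
  qed
  ultimately show ?thesis unfolding flip by simp
qed

lemma clsign_top_swap:
  assumes "B \<subseteq> {1..p+q}" "odd (p+q)"
  shows "clsign p {1..p+q} B = clsign p B {1..p+q}"
proof -
  have "card (inversions {1..p+q} B) + card (inversions B {1..p+q}) = (p+q-1) * card B"
    using card_inversions_superset[OF assms(1)] by (simp add: diff_mult_distrib)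
  moreover have "even (p+q-1)" using assms(2) by (simp add: odd_pos)
  ultimately have "(-1::complex) ^ card (inversions {1..p+q} B) = (-1) ^ card (inversions B {1..p+q})"
    by (metis even_add even_mult_iff neg_one_even_power neg_one_odd_power)
  then show ?thesis unfolding clsign_eq_inversions by (simp add: Int_commute)
qed

lemma clbasis_top_central:
  assumes "odd (p+q)"
  shows "clmul p q (clbasis {1..p+q}) X = clmul p q X (clbasis {1..p+q})"
proof (rule ext)
  fix D
  let ?N = "{1..p+q}"
  show "clmul p q (clbasis ?N) X D = clmul p q X (clbasis ?N) D"
  proof (cases "D \<subseteq> ?N")
    case True
    let ?B = "symdiff ?N D"
    have B: "?B \<in> Pow ?N" and N: "?N \<in> Pow ?N" using True by auto
    have "clmul p q (clbasis ?N) X (symdiff ?N ?B) = clmul p q X (clbasis ?N) (symdiff ?N ?B)"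
      unfolding clmul_clbasis_left[OF N B] clmul_clbasis_right[OF N B]
      using clsign_top_swap[of ?B p q] assms B by simp
    moreover have "symdiff ?N ?B = D" using True by auto
    ultimately show ?thesis by simp
  next
    case False
    then show ?thesis
      using clmul_carrier[of p q "clbasis ?N" X] clmul_carrier[of p q X "clbasis ?N"]
      by (simp add: cl_carrier_def)
  qed
qed

lemma Tr_clmul_clbasis:
  assumes "S \<in> Pow {1..p+q}"
  shows "Tr (clmul p q W (clbasis S)) = clsign p S S * W S"
  unfolding Tr_clmul clbasis_def using assms by (simp add: sum.delta if_distrib cong: if_cong)

text \<open>For odd \<open>n\<close> the pseudoscalar is central, so its coefficient in \<open>UV\<close> is a trace
  \<open>Tr(UVe\<^sup>1\<^sup>\<dots>\<^sup>n)\<close>, which is cyclic.\<close>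
lemma comm_top_coeff_eq_0:
  assumes "odd (p+q)"
  shows "comm p q U V {1..p+q} = 0"
proof -
  let ?E = "clbasis {1..p+q}"
  have N: "{1..p+q} \<in> Pow {1..p+q}" by auto
  have "Tr (clmul p q (clmul p q U V) ?E) = Tr (clmul p q (clmul p q V ?E) U)"
    by (simp add: clmul_assoc Tr_clmul_commute[of p q U])
  also have "\<dots> = Tr (clmul p q V (clmul p q ?E U))"
    by (simp add: clmul_assoc)
  also have "\<dots> = Tr (clmul p q (clmul p q V U) ?E)"
    by (simp only: clbasis_top_central[OF assms] clmul_assoc)
  finally show ?thesis
    unfolding Tr_clmul_clbasis[OF N] comm_eq using clsign_nonzero by simp
qed

lemma comm_Tr_eq_0: "Tr (comm p q U V) = 0"
  using Tr_clmul_commute[of p q U V] by (simp add: comm_eq Tr_simps)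

section \<open>A Clifford field vector generates the algebra\<close>

interpretation cl_space: vector_space "clscale :: complex \<Rightarrow> cl \<Rightarrow> cl"
  by unfold_locales (simp_all add: clscale_def fun_eq_iff algebra_simps)

lemma carrier_in_span_clbasis:
  assumes "U \<in> cl_carrier p q"
  shows "U \<in> cl_space.span (clbasis ` Pow {1..p+q})"
proof -
  have "U = (\<Sum>A\<in>Pow {1..p+q}. clscale (U A) (clbasis A))"
  proof (rule ext)
    fix D
    have "(\<Sum>A\<in>Pow {1..p+q}. clscale (U A) (clbasis A)) D = (\<Sum>A\<in>Pow {1..p+q}. if A = D then U D else 0)"
      unfolding sum_fun_apply by (intro sum.cong refl) (auto simp: clscale_def clbasis_def)
    also have "\<dots> = U D"
      using assms by (auto simp: sum.delta' cl_carrier_def)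
    finally show "U D = (\<Sum>A\<in>Pow {1..p+q}. clscale (U A) (clbasis A)) D" by simp
  qed
  also have "\<dots> \<in> cl_space.span (clbasis ` Pow {1..p+q})"
    by (intro cl_space.span_sum cl_space.span_scale cl_space.span_base) auto
  finally show ?thesis .
qed

declare upt_Suc [simp del]

locale clifford_generators =
  fixes p q :: nat and g :: "nat \<Rightarrow> cl"
  assumes generator_carrier: "\<And>a. a \<in> {1..p+q} \<Longrightarrow> g a \<in> cl_carrier p q"
    and generators_anticommutator: "\<And>a b. a \<in> {1..p+q} \<Longrightarrow> b \<in> {1..p+q} \<Longrightarrow>
        clmul p q (g a) (g b) + clmul p q (g b) (g a) = clscale (2 * eta p a b) clone"
    and Tr_generators_prod: "Tr (clprod p q (map g [1..<p+q+1])) = 0"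
begin

definition monomial :: "nat \<Rightarrow> nat set \<Rightarrow> cl" where
  "monomial k A = foldr (\<lambda>a X. clmul p q (g a) X) (filter (\<lambda>a. a \<in> A) [k..<p+q+1]) clone"

lemma generator_square:
  assumes "a \<in> {1..p+q}"
  shows "clmul p q (g a) (g a) = clscale (eta p a a) clone"
proof (rule ext)
  fix x
  have "(clmul p q (g a) (g a) + clmul p q (g a) (g a)) x = clscale (2 * eta p a a) clone x"
    using generators_anticommutator[OF assms assms] by (rule fun_cong)
  then have "2 * clmul p q (g a) (g a) x = 2 * clscale (eta p a a) clone x"
    by (simp only: plus_fun_apply clscale_def mult_2 distrib_right mult.assoc)
  then show "clmul p q (g a) (g a) x = clscale (eta p a a) clone x" by simp
qed

lemma generators_anticommute:
  assumes "a \<in> {1..p+q}" "b \<in> {1..p+q}" "a \<noteq> b"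
  shows "clmul p q (g a) (g b) = - clmul p q (g b) (g a)"
proof -
  have "eta p a b = 0" using assms by (simp add: eta_def)
  then have "clmul p q (g a) (g b) + clmul p q (g b) (g a) = 0"
    using generators_anticommutator[OF assms(1,2)] by (simp add: clscale_simps)
  then show ?thesis by (simp add: eq_neg_iff_add_eq_0)
qed

lemma monomial_top: "p+q+1 \<le> k \<Longrightarrow> monomial k A = clone"
  by (simp add: monomial_def)

lemma monomial_step:
  "k < p+q+1 \<Longrightarrow> monomial k A = (if k \<in> A then clmul p q (g k) (monomial (Suc k) A) else monomial (Suc k) A)"
  by (simp add: monomial_def upt_conv_Cons)

lemma monomial_empty: "monomial k {} = clone"
  by (simp add: monomial_def)

lemma monomial_cong:
  assumes "A \<inter> {k..<p+q+1} = B \<inter> {k..<p+q+1}"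
  shows "monomial k A = monomial k B"
proof -
  have "filter (\<lambda>a. a \<in> A) [k..<p+q+1] = filter (\<lambda>a. a \<in> B) [k..<p+q+1]"
  proof (rule filter_cong[OF refl])
    fix x assume "x \<in> set [k..<p+q+1]"
    then have "x \<in> {k..<p+q+1}" by (simp only: set_upt)
    then show "x \<in> A \<longleftrightarrow> x \<in> B" using assms by blast
  qed
  then show ?thesis unfolding monomial_def by simp
qed

lemma monomial_carrier: "monomial k A \<in> cl_carrier p q"
  unfolding monomial_def
  by (cases "filter (\<lambda>a. a \<in> A) [k..<p+q+1]") (auto simp: clmul_carrier clone_carrier)

lemma generator_mul_monomial_self:
  assumes a: "a \<in> {1..p+q}"
  shows "\<exists>s\<in>{1, -1}. clmul p q (g a) (monomial a A) = clscale s (monomial a (symdiff A {a}))"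
proof -
  have a_top: "a < p+q+1" using a by simp
  have tail: "monomial (Suc a) (symdiff A {a}) = monomial (Suc a) A"
    by (rule monomial_cong) auto
  show ?thesis
  proof (cases "a \<in> A")
    case True
    have "clmul p q (g a) (monomial a A) = clmul p q (clmul p q (g a) (g a)) (monomial (Suc a) A)"
      using a_top True by (simp add: monomial_step clmul_assoc)
    also have "\<dots> = clscale (eta p a a) (monomial a (symdiff A {a}))"
      using a a_top True tail
      by (simp add: generator_square clmul_scale_left clone_left monomial_carrier monomial_step)
    finally show ?thesis by (auto simp: eta_def)
  next
    case False
    then have "clmul p q (g a) (monomial a A) = monomial a (symdiff A {a})"
      using a_top tail by (simp add: monomial_step)
    then show ?thesis by (auto simp: clscale_simps)
  qed
qed

lemma generator_mul_monomial:
  assumes "1 \<le> k" "k \<le> a" "a \<le> p+q"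
  shows "\<exists>s\<in>{1, -1}. clmul p q (g a) (monomial k A) = clscale s (monomial k (symdiff A {a}))"
proof -
  have "k \<le> p+q+1" using assms by simp
  then show ?thesis using assms(2,3)
  proof (induction k arbitrary: A rule: inc_induct)
    case base
    then show ?case by simp
  next
    case (step n)
    have aN: "a \<in> {1..p+q}" using step.prems assms(1) step.hyps by auto
    show ?case
    proof (cases "a = n")
      case True
      then show ?thesis using generator_mul_monomial_self[OF aN] by simp
    next
      case False
      obtain s where s: "s \<in> {1, -1}"
        "clmul p q (g a) (monomial (Suc n) A) = clscale s (monomial (Suc n) (symdiff A {a}))"
        using step.IH step.prems False by force
      show ?thesis
      proof (cases "n \<in> A")
        case nA: True
        have nN: "n \<in> {1..p+q}" using step.hyps assms(1) aN False step.prems by auto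
        have "clmul p q (g a) (monomial n A) = clmul p q (clmul p q (g a) (g n)) (monomial (Suc n) A)"
          using step.hyps nA by (simp add: monomial_step clmul_assoc)
        also have "\<dots> = - clmul p q (g n) (clmul p q (g a) (monomial (Suc n) A))"
          using generators_anticommute[OF aN nN False] by (simp add: clmul_neg_left clmul_assoc)
        also have "\<dots> = clscale (-s) (monomial n (symdiff A {a}))"
          using step.hyps nA False by (simp add: s clmul_scale_right clscale_simps monomial_step)
        finally show ?thesis using s by auto
      next
        case nA: False
        then have "clmul p q (g a) (monomial n A) = clscale s (monomial n (symdiff A {a}))"
          using step.hyps s(2) False by (simp add: monomial_step)
        then show ?thesis using s(1) by blast
      qed
    qed
  qed
qed

lemma generator_monomial_commute:
  assumes "1 \<le> k" "k \<le> p+q+1" "a \<in> {1..p+q}"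
  shows "clmul p q (g a) (monomial k A) =
    clscale ((-1) ^ card ((A \<inter> {k..<p+q+1}) - {a})) (clmul p q (monomial k A) (g a))"
  using assms(2)
proof (induction k rule: inc_induct)
  case base
  then show ?case
    using generator_carrier[OF assms(3)] by (simp add: monomial_top clone_left clone_right clscale_simps)
next
  case (step n)
  let ?c = "card ((A \<inter> {Suc n..<p+q+1}) - {a})"
  show ?case
  proof (cases "n \<in> A")
    case nA: False
    have "A \<inter> {n..<p+q+1} = A \<inter> {Suc n..<p+q+1}" using nA by (auto simp: Suc_le_eq le_less)
    then show ?thesis using step.IH step.hyps nA by (simp add: monomial_step)
  next
    case nA: True
    have mono: "monomial n A = clmul p q (g n) (monomial (Suc n) A)"
      using step.hyps nA by (simp add: monomial_step)
    show ?thesis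
    proof (cases "a = n")
      case True
      have card: "(A \<inter> {n..<p+q+1}) - {a} = (A \<inter> {Suc n..<p+q+1}) - {a}" using True by auto
      have "clmul p q (g a) (clmul p q (g n) (monomial (Suc n) A)) =
          clmul p q (g n) (clmul p q (g a) (monomial (Suc n) A))"
        using True by simp
      also have "\<dots> = clscale ((-1) ^ ?c) (clmul p q (clmul p q (g n) (monomial (Suc n) A)) (g a))"
        unfolding step.IH by (simp add: clmul_scale_right clmul_assoc)
      finally show ?thesis unfolding mono card .
    next
      case False
      have nN: "n \<in> {1..p+q}" using step.hyps assms nA by auto
      have "(A \<inter> {n..<p+q+1}) - {a} = insert n ((A \<inter> {Suc n..<p+q+1}) - {a})"
        using False nA step.hyps by auto
      then have card: "card ((A \<inter> {n..<p+q+1}) - {a}) = Suc ?c" by simp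
      have "clmul p q (g a) (monomial n A) = clmul p q (clmul p q (g a) (g n)) (monomial (Suc n) A)"
        unfolding mono by (simp add: clmul_assoc)
      also have "\<dots> = - clmul p q (g n) (clmul p q (g a) (monomial (Suc n) A))"
        using generators_anticommute[OF assms(3) nN False] by (simp add: clmul_neg_left clmul_assoc)
      also have "\<dots> = clscale (- ((-1) ^ ?c)) (clmul p q (monomial n A) (g a))"
        unfolding step.IH mono by (simp add: clmul_scale_right clscale_simps clmul_assoc)
      finally show ?thesis unfolding card by simp
    qed
  qed
qed

text \<open>If \<open>g a\<close> anticommutes with \<open>X\<close>, cyclicity of the trace gives
  \<open>\<eta>\<^sub>a\<^sub>a Tr X = Tr (g a (g a X)) = - Tr (g a (X g a)) = - \<eta>\<^sub>a\<^sub>a Tr X\<close>.\<close>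
lemma Tr_monomial_odd:
  assumes C: "C \<subseteq> {1..p+q}" and a: "a \<in> {1..p+q}" and odd: "odd (card (C - {a}))"
  shows "Tr (monomial 1 C) = 0"
proof -
  let ?X = "monomial 1 C"
  have "(C \<inter> {1..<p+q+1}) - {a} = C - {a}" using C by auto
  then have anti: "clmul p q (g a) ?X = - clmul p q ?X (g a)"
    using generator_monomial_commute[of 1 a C] a odd by (simp add: clscale_simps)
  have "eta p a a * Tr ?X = Tr (clmul p q (g a) (clmul p q (g a) ?X))"
    using a by (simp add: clmul_assoc[symmetric] generator_square clmul_scale_left clone_left
        monomial_carrier Tr_simps)
  also have "\<dots> = - Tr (clmul p q (g a) (clmul p q ?X (g a)))"
    by (simp only: anti clmul_neg_right Tr_simps)
  also have "\<dots> = - Tr (clmul p q (clmul p q ?X (g a)) (g a))"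
    by (simp only: Tr_clmul_commute)
  also have "\<dots> = - (eta p a a * Tr ?X)"
    using a by (simp add: clmul_assoc generator_square clmul_scale_right clone_right monomial_carrier Tr_simps)
  finally show ?thesis using eta_diag_nonzero[of p a] by simp
qed

lemma Tr_monomial_top: "Tr (monomial 1 {1..p+q}) = 0"
proof -
  have "filter (\<lambda>a. a \<in> {1..p+q}) [1..<p+q+1] = [1..<p+q+1]"
    by (rule filter_True) auto
  then have "monomial 1 {1..p+q} = clprod p q (map g [1..<p+q+1])"
    by (simp add: monomial_def clprod_def foldr_map o_def)
  then show ?thesis using Tr_generators_prod by simp
qed

lemma Tr_monomial:
  assumes C: "C \<subseteq> {1..p+q}" and nonempty: "C \<noteq> {}"
  shows "Tr (monomial 1 C) = 0"
proof -
  have fC: "finite C" using C finite_subset by blast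
  consider "even (card C)" | "odd (card C)" "C = {1..p+q}" | "odd (card C)" "C \<noteq> {1..p+q}"
    by blast
  then show ?thesis
  proof cases
    case 1
    obtain a where "a \<in> C" using nonempty by auto
    then show ?thesis using Tr_monomial_odd[OF C, of a] 1 C fC card_gt_0_iff by fastforce
  next
    case 2
    then show ?thesis using Tr_monomial_top by simp
  next
    case 3
    then obtain a where "a \<in> {1..p+q}" "a \<notin> C" using C by blast
    then show ?thesis using Tr_monomial_odd[OF C] 3 by simp
  qed
qed

lemma monomial_mul:
  assumes "A \<subseteq> {1..p+q}" "B \<subseteq> {1..p+q}"
  shows "\<exists>s\<in>{1, -1}. clmul p q (monomial 1 A) (monomial 1 B) = clscale s (monomial 1 (symdiff A B))"
proof -
  have "\<exists>s\<in>{1, -1}. clmul p q (foldr (\<lambda>a X. clmul p q (g a) X) L clone) (monomial 1 B) =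
      clscale s (monomial 1 (symdiff B (set L)))"
    if "distinct L" "set L \<subseteq> {1..p+q}" for L
    using that
  proof (induction L)
    case Nil
    then show ?case by (auto simp: clone_left monomial_carrier clscale_simps)
  next
    case (Cons a L)
    have "distinct L" "set L \<subseteq> {1..p+q}" using Cons.prems by auto
    then obtain s where s: "s \<in> {1, -1}" "clmul p q (foldr (\<lambda>a X. clmul p q (g a) X) L clone) (monomial 1 B) =
        clscale s (monomial 1 (symdiff B (set L)))"
      using Cons.IH by blast
    have a: "1 \<le> a" "a \<le> p+q" "a \<notin> set L" using Cons.prems by auto
    obtain s' where s': "s' \<in> {1, -1}" "clmul p q (g a) (monomial 1 (symdiff B (set L))) =
        clscale s' (monomial 1 (symdiff (symdiff B (set L)) {a}))"
      using generator_mul_monomial[of 1 a] a by blast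
    have "symdiff (symdiff B (set L)) {a} = symdiff B (set (a # L))" using a by auto
    then have "clmul p q (foldr (\<lambda>a X. clmul p q (g a) X) (a # L) clone) (monomial 1 B) =
        clscale (s * s') (monomial 1 (symdiff B (set (a # L))))"
      using s s' by (simp add: clmul_assoc clmul_scale_right clscale_simps mult.commute)
    then show ?case using s s' by auto
  qed
  moreover have "set (filter (\<lambda>a. a \<in> A) [1..<p+q+1]) = A" using assms by auto
  moreover have "symdiff B A = symdiff A B" by auto
  ultimately show ?thesis
    unfolding monomial_def[of 1 A] by (metis assms(1) distinct_filter distinct_upt)
qed

lemma Tr_monomial_mul_eq_0_iff:
  assumes "A \<subseteq> {1..p+q}" "B \<subseteq> {1..p+q}"
  shows "Tr (clmul p q (monomial 1 A) (monomial 1 B)) = 0 \<longleftrightarrow> A \<noteq> B"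
proof -
  obtain s where s: "s \<in> {1, -1}" "clmul p q (monomial 1 A) (monomial 1 B) = clscale s (monomial 1 (symdiff A B))"
    using monomial_mul[OF assms] by blast
  have "Tr (monomial 1 (symdiff A B)) = 0" if "A \<noteq> B"
    by (rule Tr_monomial) (use assms that in auto)
  then show ?thesis
    using s by (cases "A = B") (auto simp: Tr_simps monomial_empty)
qed

lemma inj_on_monomial: "inj_on (monomial 1) (Pow {1..p+q})"
proof (rule inj_onI)
  fix A B assume A: "A \<in> Pow {1..p+q}" and B: "B \<in> Pow {1..p+q}" and eq: "monomial 1 A = monomial 1 B"
  have "Tr (clmul p q (monomial 1 A) (monomial 1 B)) \<noteq> 0"
    unfolding eq using Tr_monomial_mul_eq_0_iff[of B B] B by auto
  then show "A = B" using Tr_monomial_mul_eq_0_iff[of A B] A B by auto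
qed

lemma independent_monomials: "cl_space.independent (monomial 1 ` Pow {1..p+q})"
  unfolding cl_space.independent_explicit_finite_subsets
proof (intro allI impI ballI)
  fix T u v
  assume T: "T \<subseteq> monomial 1 ` Pow {1..p+q}" "finite T"
    and sum0: "(\<Sum>v\<in>T. clscale (u v) v) = 0" and v: "v \<in> T"
  obtain B where B: "B \<in> Pow {1..p+q}" "v = monomial 1 B" using T v by auto
  have "0 = Tr (clmul p q (\<Sum>v\<in>T. clscale (u v) v) (monomial 1 B))"
    unfolding sum0 by (simp add: Tr_simps)
  also have "\<dots> = (\<Sum>w\<in>T. u w * Tr (clmul p q w (monomial 1 B)))"
    using T by (simp add: clmul_sum_left Tr_sum clmul_scale_left Tr_simps)
  also have "\<dots> = u v * Tr (clmul p q v (monomial 1 B)) + (\<Sum>w\<in>T - {v}. u w * Tr (clmul p q w (monomial 1 B)))"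
    by (rule sum.remove[OF T(2) v])
  also have "(\<Sum>w\<in>T - {v}. u w * Tr (clmul p q w (monomial 1 B))) = 0"
  proof (rule sum.neutral, rule ballI)
    fix w assume w: "w \<in> T - {v}"
    then obtain A where A: "A \<in> Pow {1..p+q}" "w = monomial 1 A" using T by auto
    then have "A \<noteq> B" using w B by auto
    then show "u w * Tr (clmul p q w (monomial 1 B)) = 0"
      using Tr_monomial_mul_eq_0_iff[of A B] A B by simp
  qed
  finally have "u v * Tr (clmul p q v (monomial 1 B)) = 0" by simp
  moreover have "Tr (clmul p q v (monomial 1 B)) \<noteq> 0"
    using Tr_monomial_mul_eq_0_iff[of B B] B by auto
  ultimately show "u v = 0" by simp
qed

text \<open>There are \<open>2\<^sup>n\<close> independent monomials in the \<open>2\<^sup>n\<close>-dimensional algebra.\<close>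
lemma carrier_subset_span_monomials: "cl_carrier p q \<subseteq> cl_space.span (monomial 1 ` Pow {1..p+q})"
proof
  fix U assume U: "U \<in> cl_carrier p q"
  let ?S = "monomial 1 ` Pow {1..p+q}"
  let ?T = "clbasis ` Pow {1..p+q}"
  show "U \<in> cl_space.span ?S"
  proof (rule ccontr)
    assume nU: "U \<notin> cl_space.span ?S"
    have independent: "cl_space.independent (insert U ?S)"
      by (rule cl_space.independent_insertI[OF nU independent_monomials])
    have spanned: "insert U ?S \<subseteq> cl_space.span ?T"
      unfolding insert_subset image_subset_iff
      using carrier_in_span_clbasis[OF U] carrier_in_span_clbasis[OF monomial_carrier] by simp
    have fT: "finite ?T" by simp
    have "card (insert U ?S) \<le> card ?T"
      using cl_space.independent_span_bound[OF fT independent spanned] by (rule conjunct2)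
    also have "\<dots> \<le> card (Pow {1..p+q})"
      by (rule card_image_le) simp
    also have "\<dots> = card ?S"
      by (rule card_image[OF inj_on_monomial, symmetric])
    finally have "card (insert U ?S) \<le> card ?S" .
    moreover have "U \<notin> ?S"
    proof
      assume "U \<in> ?S"
      then have "U \<in> cl_space.span ?S" by (rule cl_space.span_base)
      with nU show False by simp
    qed
    ultimately show False by simp
  qed
qed
lemma commutes_with_carrier:
  assumes X: "X \<in> cl_carrier p q"
    and commutes: "\<And>a. a \<in> {1..p+q} \<Longrightarrow> clmul p q (g a) X = clmul p q X (g a)"
    and Y: "Y \<in> cl_carrier p q"
  shows "clmul p q Y X = clmul p q X Y"
proof -
  have foldr_commutes: "clmul p q (foldr (\<lambda>a X. clmul p q (g a) X) L clone) X =
      clmul p q X (foldr (\<lambda>a X. clmul p q (g a) X) L clone)" if "set L \<subseteq> {1..p+q}" for L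
    using that
  proof (induction L)
    case Nil
    then show ?case by (simp add: clone_left clone_right X)
  next
    case (Cons a L)
    let ?F = "foldr (\<lambda>a X. clmul p q (g a) X) L clone"
    have a: "a \<in> {1..p+q}" and IH: "clmul p q ?F X = clmul p q X ?F" using Cons by auto
    have "clmul p q (clmul p q (g a) ?F) X = clmul p q (clmul p q (g a) X) ?F"
      by (simp add: clmul_assoc IH)
    also have "\<dots> = clmul p q X (clmul p q (g a) ?F)"
      by (simp add: commutes[OF a] clmul_assoc)
    finally show ?case by simp
  qed
  have "Y \<in> cl_space.span (monomial 1 ` Pow {1..p+q})"
    using carrier_subset_span_monomials Y by auto
  then show ?thesis
  proof (induction rule: cl_space.span_induct)
    case base
    show ?case
      by (rule cl_space.subspaceI)
        (auto simp: clmul_add_left clmul_add_right clmul_scale_left clmul_scale_right)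
  next
    case (step Z)
    then obtain A where "Z = monomial 1 A" by blast
    moreover have "set (filter (\<lambda>a. a \<in> A) [1..<p+q+1]) \<subseteq> {1..p+q}" by auto
    ultimately show ?case unfolding monomial_def using foldr_commutes by simp
  qed
qed

end

lemma cl_S_commuting_with_generators_eq_0:
  assumes "clifford_generators p q g" and X: "X \<in> cl_S p q"
    and commutes: "\<And>a. a \<in> {1..p+q} \<Longrightarrow> clmul p q (g a) X = clmul p q X (g a)"
  shows "X = 0"
proof (rule cl_S_commuting_with_clgen_eq_0[OF X], rule ballI)
  interpret clifford_generators p q g by fact
  fix a assume "a \<in> {1..p+q}"
  then have "clgen a \<in> cl_carrier p q" by (auto simp: clgen_def cl_carrier_def)
  then show "clmul p q (clgen a) X = clmul p q X (clgen a)"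
    using commutes_with_carrier X commutes by (auto simp: cl_S_def)
qed

section \<open>Symmetry of second partial derivatives\<close>

lemma norm_increment_sub_linear_le:
  fixes f f' :: "real \<Rightarrow> 'a::real_normed_vector"
  assumes "a \<le> b" and deriv: "\<And>x. (f has_vector_derivative f' x) (at x)"
    and bound: "\<And>x. x \<in> {a..b} \<Longrightarrow> norm (f' x - c) \<le> B"
  shows "norm (f b - f a - (b - a) *\<^sub>R c) \<le> B * (b - a)"
proof (cases "a = b")
  case True
  then show ?thesis by simp
next
  case False
  then have ab: "a < b" using assms by simp
  have "((\<lambda>x. x *\<^sub>R c) has_vector_derivative c) (at x)" for x
    by (auto intro!: derivative_eq_intros)
  then have g: "((\<lambda>x. f x - x *\<^sub>R c) has_vector_derivative f' x - c) (at x)" for x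
    by (rule has_vector_derivative_diff[OF deriv])
  have "norm ((f b - b *\<^sub>R c) - (f a - a *\<^sub>R c)) \<le> B * b - B * a"
  proof (rule differentiable_bound_general[OF ab, where \<phi>="\<lambda>x. B * x" and \<phi>'="\<lambda>_. B"])
    show "continuous_on {a..b} (\<lambda>x. f x - x *\<^sub>R c)"
      by (rule continuous_on_vector_derivative) (use g has_vector_derivative_at_within in blast)
    show "((\<lambda>x. B * x) has_vector_derivative B) (at x)" for x
      by (rule has_real_derivative_iff_has_vector_derivative[THEN iffD1]) (auto intro!: derivative_eq_intros)
  qed (use g bound in \<open>auto intro!: continuous_intros\<close>)
  then show ?thesis by (simp add: algebra_simps)
qed

lemma norm_second_difference_le:
  fixes F Fs Fst :: "real \<Rightarrow> real \<Rightarrow> 'a::real_normed_vector"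
  assumes "0 \<le> h"
    and Fs: "\<And>u v. ((\<lambda>u. F u v) has_vector_derivative Fs u v) (at u)"
    and Fst: "\<And>u v. ((\<lambda>v. Fs u v) has_vector_derivative Fst u v) (at v)"
    and bound: "\<And>u v. u \<in> {s..s+h} \<Longrightarrow> v \<in> {t..t+h} \<Longrightarrow> norm (Fst u v - c) \<le> e"
  shows "norm (F (s+h) (t+h) - F (s+h) t - F s (t+h) + F s t - (h * h) *\<^sub>R c) \<le> e * h * h"
proof -
  have inner: "norm (Fs u (t+h) - Fs u t - h *\<^sub>R c) \<le> e * h" if "u \<in> {s..s+h}" for u
    using norm_increment_sub_linear_le[of t "t+h" "Fs u" "Fst u" c e] Fst bound that \<open>0 \<le> h\<close> by simp
  have "norm ((F (s+h) (t+h) - F (s+h) t) - (F s (t+h) - F s t) - h *\<^sub>R (h *\<^sub>R c)) \<le> (e * h) * h"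
    using norm_increment_sub_linear_le[of s "s+h" "\<lambda>u. F u (t+h) - F u t" "\<lambda>u. Fs u (t+h) - Fs u t"
        "h *\<^sub>R c" "e * h"] inner \<open>0 \<le> h\<close> by (simp add: Fs has_vector_derivative_diff)
  then show ?thesis by (simp add: algebra_simps)
qed

lemma dist_square_le:
  fixes u v s t h :: real
  assumes "u \<in> {s..s+h}" "v \<in> {t..t+h}"
  shows "dist (u, v) (s, t) \<le> 2 * h"
proof -
  have "dist (u, v) (s, t) = sqrt ((dist u s)\<^sup>2 + (dist v t)\<^sup>2)"
    by (rule dist_Pair_Pair)
  also have "\<dots> \<le> \<bar>dist u s\<bar> + \<bar>dist v t\<bar>"
    by (rule sqrt_sum_squares_le_sum_abs)
  also have "\<dots> \<le> 2 * h"
    using assms by (auto simp: dist_real_def)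
  finally show ?thesis .
qed

text \<open>Both mixed partials approximate the same second difference, symmetric in the two variables.\<close>
lemma mixed_partials_eq:
  fixes F Fs Ft Fst Fts :: "real \<Rightarrow> real \<Rightarrow> 'a::real_normed_vector"
  assumes Fs: "\<And>u v. ((\<lambda>u. F u v) has_vector_derivative Fs u v) (at u)"
    and Ft: "\<And>u v. ((\<lambda>v. F u v) has_vector_derivative Ft u v) (at v)"
    and Fst: "\<And>u v. ((\<lambda>v. Fs u v) has_vector_derivative Fst u v) (at v)"
    and Fts: "\<And>u v. ((\<lambda>u. Ft u v) has_vector_derivative Fts u v) (at u)"
    and cont_st: "continuous (at (s, t)) (\<lambda>z. Fst (fst z) (snd z))"
    and cont_ts: "continuous (at (s, t)) (\<lambda>z. Fts (fst z) (snd z))"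
  shows "Fst s t = Fts s t"
proof -
  have "norm (Fst s t - Fts s t) \<le> 2 * e" if "e > 0" for e
  proof -
    obtain d1 where "d1 > 0" and d1: "\<And>z. dist z (s, t) < d1 \<Longrightarrow> dist (Fst (fst z) (snd z)) (Fst s t) < e"
      using cont_st \<open>e > 0\<close> unfolding continuous_at_eps_delta by fastforce
    obtain d2 where "d2 > 0" and d2: "\<And>z. dist z (s, t) < d2 \<Longrightarrow> dist (Fts (fst z) (snd z)) (Fts s t) < e"
      using cont_ts \<open>e > 0\<close> unfolding continuous_at_eps_delta by fastforce
    define h where "h = min d1 d2 / 3"
    have "h > 0" using \<open>d1 > 0\<close> \<open>d2 > 0\<close> by (simp add: h_def)
    have near: "dist (u, v) (s, t) < d1" "dist (u, v) (s, t) < d2"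
      if "u \<in> {s..s+h}" "v \<in> {t..t+h}" for u v
      using dist_square_le[OF that] \<open>h > 0\<close> unfolding h_def by linarith+
    let ?D = "F (s+h) (t+h) - F (s+h) t - F s (t+h) + F s t"
    have st: "norm (?D - (h * h) *\<^sub>R Fst s t) \<le> e * h * h"
      by (rule norm_second_difference_le[OF _ Fs Fst]) (use \<open>h > 0\<close> d1 near in \<open>auto simp: dist_norm less_imp_le\<close>)
    have "norm (F (s+h) (t+h) - F s (t+h) - F (s+h) t + F s t - (h * h) *\<^sub>R Fts s t) \<le> e * h * h"
      by (rule norm_second_difference_le[where F="\<lambda>v u. F u v" and Fs="\<lambda>v u. Ft u v" and Fst="\<lambda>v u. Fts u v"])
        (use Ft Fts \<open>h > 0\<close> d2 near in \<open>auto simp: dist_norm less_imp_le\<close>)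
    then have ts: "norm (?D - (h * h) *\<^sub>R Fts s t) \<le> e * h * h"
      by (simp add: algebra_simps)
    have "(h * h) * norm (Fst s t - Fts s t) = norm ((h * h) *\<^sub>R (Fst s t - Fts s t))"
      by simp
    also have "(h * h) *\<^sub>R (Fst s t - Fts s t) = (?D - (h * h) *\<^sub>R Fts s t) - (?D - (h * h) *\<^sub>R Fst s t)"
      by (simp add: algebra_simps)
    also have "norm \<dots> \<le> e * h * h + e * h * h"
      by (rule order_trans[OF norm_triangle_ineq4 add_mono[OF ts st]])
    finally have "(h * h) * norm (Fst s t - Fts s t) \<le> (h * h) * (2 * e)"
      by (simp add: algebra_simps)
    then show ?thesis using \<open>h > 0\<close> by simp
  qed
  then have "norm (Fst s t - Fts s t) \<le> 0 + e" if "e > 0" for e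
    using that by (metis add_0 field_sum_of_halves half_gt_zero_iff mult_2)
  then have "norm (Fst s t - Fts s t) \<le> 0"
    by (rule field_le_epsilon)
  then show ?thesis by simp
qed

section \<open>Partial derivatives on \<open>\<real>\<^sup>p\<^sup>,\<^sup>q\<close>\<close>

lemma fun_upd_in_Rpq: "x \<in> Rpq p q \<Longrightarrow> mu \<in> {1..p+q} \<Longrightarrow> x(mu := t) \<in> Rpq p q"
  by (auto simp: Rpq_def)

lemma has_pd_has_vector_derivative:
  "has_pd mu f y \<Longrightarrow> ((\<lambda>u. f (y(mu := u))) has_vector_derivative pd mu f y) (at (y mu))"
  by (simp add: has_pd_def pd_def vector_derivative_works[symmetric])

lemma continuous_on_fun_upd2: "continuous_on UNIV (\<lambda>z::real \<times> real. x(mu := fst z, nu := snd z))"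
proof (rule continuous_on_coordinatewise_then_product)
  fix i
  show "continuous_on UNIV (\<lambda>z::real \<times> real. (x(mu := fst z, nu := snd z)) i)"
    by (cases "i = nu"; cases "i = mu") (auto intro!: continuous_intros)
qed

text \<open>Clairaut: restrict \<open>f\<close> to the plane through \<open>x\<close> spanned by the coordinates \<open>\<mu>\<close> and \<open>\<nu>\<close>.\<close>
lemma pd_commute:
  assumes f: "C2_scalar p q f" and x: "x \<in> Rpq p q" and mu: "mu \<in> {1..p+q}" and nu: "nu \<in> {1..p+q}"
  shows "pd nu (pd mu f) x = pd mu (pd nu f) x"
proof (cases "mu = nu")
  case True
  then show ?thesis by simp
next
  case False
  define P where "P s t = x(mu := s, nu := t)" for s t
  have P_Rpq: "P s t \<in> Rpq p q" for s t
    unfolding P_def using x mu nu by (intro fun_upd_in_Rpq) auto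
  have P_upd: "(P s t)(mu := u) = P u t" "(P s t)(nu := v) = P s v" for s t u v
    unfolding P_def using False by (simp_all add: fun_upd_twist)
  have P_at: "P s t mu = s" "P s t nu = t" for s t
    unfolding P_def using False by simp_all
  have has_pd: "has_pd m f y" "has_pd n (pd m f) y"
    if "y \<in> Rpq p q" "m \<in> {1..p+q}" "n \<in> {1..p+q}" for y m n
    using f that unfolding C2_scalar_def by auto
  have continuous: "continuous (at (s, t)) (\<lambda>z. pd n (pd m f) (P (fst z) (snd z)))"
    if "m \<in> {1..p+q}" "n \<in> {1..p+q}" for m n s t
  proof -
    have "continuous_on (Rpq p q) (pd n (pd m f))"
      using f that by (simp add: C2_scalar_def)
    then have "continuous_on UNIV (\<lambda>z. pd n (pd m f) (P (fst z) (snd z)))"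
      by (rule continuous_on_compose2[OF _ continuous_on_fun_upd2[of x mu nu, folded P_def]])
        (use P_Rpq in auto)
    then show ?thesis by (simp add: continuous_on_eq_continuous_at)
  qed
  have "pd nu (pd mu f) (P (x mu) (x nu)) = pd mu (pd nu f) (P (x mu) (x nu))"
  proof (rule mixed_partials_eq[where F="\<lambda>s t. f (P s t)"])
    show "((\<lambda>u. f (P u t)) has_vector_derivative pd mu f (P s t)) (at s)" for s t
      using has_pd_has_vector_derivative[OF has_pd(1)[OF P_Rpq mu nu]] unfolding P_upd P_at .
    show "((\<lambda>v. f (P s v)) has_vector_derivative pd nu f (P s t)) (at t)" for s t
      using has_pd_has_vector_derivative[OF has_pd(1)[OF P_Rpq nu mu]] unfolding P_upd P_at .
    show "((\<lambda>v. pd mu f (P s v)) has_vector_derivative pd nu (pd mu f) (P s t)) (at t)" for s t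
      using has_pd_has_vector_derivative[OF has_pd(2)[OF P_Rpq mu nu]] unfolding P_upd P_at .
    show "((\<lambda>u. pd nu f (P u t)) has_vector_derivative pd mu (pd nu f) (P s t)) (at s)" for s t
      using has_pd_has_vector_derivative[OF has_pd(2)[OF P_Rpq nu mu]] unfolding P_upd P_at .
  qed (use continuous mu nu in auto)
  then show ?thesis by (simp add: P_def)
qed

lemma has_pd_add: "has_pd mu f x \<Longrightarrow> has_pd mu g x \<Longrightarrow> has_pd mu (\<lambda>y. f y + g y) x"
  unfolding has_pd_def by (rule differentiable_add)

lemma has_pd_diff: "has_pd mu f x \<Longrightarrow> has_pd mu g x \<Longrightarrow> has_pd mu (\<lambda>y. f y - g y) x"
  unfolding has_pd_def by (rule differentiable_diff)

lemma has_pd_mult: "has_pd mu f x \<Longrightarrow> has_pd mu g x \<Longrightarrow> has_pd mu (\<lambda>y. f y * g y) x"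
  unfolding has_pd_def by (rule differentiable_mult)

lemma has_pd_const: "has_pd mu (\<lambda>y. c) x"
  unfolding has_pd_def by simp

lemma has_pd_cmult: "has_pd mu f x \<Longrightarrow> has_pd mu (\<lambda>y. c * f y) x"
  using has_pd_mult[OF has_pd_const] by blast

lemma has_pd_sum:
  "finite I \<Longrightarrow> (\<And>i. i \<in> I \<Longrightarrow> has_pd mu (f i) x) \<Longrightarrow> has_pd mu (\<lambda>y. \<Sum>i\<in>I. f i y) x"
proof (induction I rule: finite_induct)
  case empty
  then show ?case by (simp add: has_pd_const)
next
  case (insert i I)
  then have "has_pd mu (\<lambda>y. f i y + (\<Sum>i\<in>I. f i y)) x" by (intro has_pd_add) auto
  then show ?case using insert.hyps by simp
qed

lemma pd_add: "has_pd mu f x \<Longrightarrow> has_pd mu g x \<Longrightarrow> pd mu (\<lambda>y. f y + g y) x = pd mu f x + pd mu g x"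
  unfolding has_pd_def pd_def by (rule vector_derivative_add_at)

lemma pd_diff: "has_pd mu f x \<Longrightarrow> has_pd mu g x \<Longrightarrow> pd mu (\<lambda>y. f y - g y) x = pd mu f x - pd mu g x"
  unfolding has_pd_def pd_def by (rule vector_derivative_diff_at)

lemma pd_mult:
  "has_pd mu f x \<Longrightarrow> has_pd mu g x \<Longrightarrow> pd mu (\<lambda>y. f y * g y) x = pd mu f x * g x + f x * pd mu g x"
  unfolding has_pd_def pd_def by (simp add: vector_derivative_mult_at)

lemma pd_const: "pd mu (\<lambda>y. c) x = 0"
  unfolding pd_def by simp

lemma pd_cmult: "has_pd mu f x \<Longrightarrow> pd mu (\<lambda>y. c * f y) x = c * pd mu f x"
  using pd_mult[OF has_pd_const, of mu f x c] by (simp add: pd_const)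

lemma pd_sum:
  "finite I \<Longrightarrow> (\<And>i. i \<in> I \<Longrightarrow> has_pd mu (f i) x) \<Longrightarrow> pd mu (\<lambda>y. \<Sum>i\<in>I. f i y) x = (\<Sum>i\<in>I. pd mu (f i) x)"
proof (induction I rule: finite_induct)
  case empty
  then show ?case by (simp add: pd_const)
next
  case (insert i I)
  have "pd mu (\<lambda>y. \<Sum>i\<in>insert i I. f i y) x = pd mu (\<lambda>y. f i y + (\<Sum>i\<in>I. f i y)) x"
    using insert.hyps by simp
  also have "\<dots> = pd mu (f i) x + pd mu (\<lambda>y. \<Sum>i\<in>I. f i y) x"
    by (rule pd_add) (use insert in \<open>auto intro: has_pd_sum\<close>)
  finally show ?case using insert by simp
qed

lemma pd_cong_line:
  assumes "\<And>t. f (x(mu := t)) = g (x(mu := t))"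
  shows "pd mu f x = pd mu g x"
  unfolding pd_def using assms by presburger

lemma pd_eq_0_if_vanishes:
  assumes "x \<in> Rpq p q" "mu \<in> {1..p+q}" "\<And>y. y \<in> Rpq p q \<Longrightarrow> f y = 0"
  shows "pd mu f x = 0"
  using pd_cong_line[of f x mu "\<lambda>y. 0"] assms fun_upd_in_Rpq by (simp add: pd_const)

definition has_cpd :: "nat \<Rightarrow> (point \<Rightarrow> cl) \<Rightarrow> point \<Rightarrow> bool" where
  "has_cpd mu F x \<longleftrightarrow> (\<forall>A. has_pd mu (\<lambda>y. F y A) x)"

lemma has_cpd_diff: "has_cpd mu F x \<Longrightarrow> has_cpd mu G x \<Longrightarrow> has_cpd mu (\<lambda>y. F y - G y) x"
  unfolding has_cpd_def by (auto intro: has_pd_diff)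

lemma has_cpd_scale: "has_cpd mu F x \<Longrightarrow> has_cpd mu (\<lambda>y. clscale c (F y)) x"
  unfolding has_cpd_def clscale_def by (auto intro: has_pd_cmult)

lemma cpd_add: "has_cpd mu F x \<Longrightarrow> has_cpd mu G x \<Longrightarrow> cpd mu (\<lambda>y. F y + G y) x = cpd mu F x + cpd mu G x"
  unfolding has_cpd_def cpd_def by (auto simp: fun_eq_iff pd_add)

lemma cpd_diff: "has_cpd mu F x \<Longrightarrow> has_cpd mu G x \<Longrightarrow> cpd mu (\<lambda>y. F y - G y) x = cpd mu F x - cpd mu G x"
  unfolding has_cpd_def cpd_def by (auto simp: fun_eq_iff pd_diff)

lemma cpd_scale: "has_cpd mu F x \<Longrightarrow> cpd mu (\<lambda>y. clscale c (F y)) x = clscale c (cpd mu F x)"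
  unfolding has_cpd_def cpd_def clscale_def by (auto simp: fun_eq_iff pd_cmult)

lemma clmul_eq_bilinear_sum: "clmul p q U V = (\<lambda>D. \<Sum>A\<in>Pow {1..p+q}. \<Sum>B\<in>Pow {1..p+q}.
      (if symdiff A B = D then clsign p A B else 0) * (U A * V B))"
  unfolding clmul_def by (auto simp: fun_eq_iff intro!: sum.cong)

lemma has_cpd_clmul: "has_cpd mu F x \<Longrightarrow> has_cpd mu G x \<Longrightarrow> has_cpd mu (\<lambda>y. clmul p q (F y) (G y)) x"
  unfolding has_cpd_def clmul_eq_bilinear_sum by (auto intro!: has_pd_sum has_pd_cmult has_pd_mult)

lemma cpd_clmul:
  assumes F: "has_cpd mu F x" and G: "has_cpd mu G x"
  shows "cpd mu (\<lambda>y. clmul p q (F y) (G y)) x = clmul p q (cpd mu F x) (G x) + clmul p q (F x) (cpd mu G x)"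
proof (rule ext)
  fix D
  let ?P = "Pow {1..p+q}"
  let ?c = "\<lambda>A B. if symdiff A B = D then clsign p A B else 0"
  have F': "\<And>A. has_pd mu (\<lambda>y. F y A) x" and G': "\<And>B. has_pd mu (\<lambda>y. G y B) x"
    using F G by (auto simp: has_cpd_def)
  have "cpd mu (\<lambda>y. clmul p q (F y) (G y)) x D = pd mu (\<lambda>y. \<Sum>A\<in>?P. \<Sum>B\<in>?P. ?c A B * (F y A * G y B)) x"
    unfolding cpd_def clmul_eq_bilinear_sum ..
  also have "\<dots> = (\<Sum>A\<in>?P. \<Sum>B\<in>?P. ?c A B * (pd mu (\<lambda>y. F y A) x * G x B + F x A * pd mu (\<lambda>y. G y B) x))"
    by (simp add: pd_sum has_pd_sum has_pd_cmult has_pd_mult F' G' pd_cmult pd_mult)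
  also have "\<dots> = (clmul p q (cpd mu F x) (G x) + clmul p q (F x) (cpd mu G x)) D"
    unfolding clmul_eq_bilinear_sum cpd_def by (simp add: sum.distrib[symmetric] algebra_simps)
  finally show "cpd mu (\<lambda>y. clmul p q (F y) (G y)) x D =
      (clmul p q (cpd mu F x) (G x) + clmul p q (F x) (cpd mu G x)) D" .
qed

lemma has_cpd_comm: "has_cpd mu F x \<Longrightarrow> has_cpd mu G x \<Longrightarrow> has_cpd mu (\<lambda>y. comm p q (F y) (G y)) x"
  unfolding comm_eq by (intro has_cpd_diff has_cpd_clmul)

lemma cpd_comm:
  assumes "has_cpd mu F x" "has_cpd mu G x"
  shows "cpd mu (\<lambda>y. comm p q (F y) (G y)) x = comm p q (cpd mu F x) (G x) + comm p q (F x) (cpd mu G x)"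
  unfolding comm_eq using assms by (simp add: cpd_diff has_cpd_clmul cpd_clmul algebra_simps)

lemma cpd_cong_line:
  assumes "\<And>t. F (x(mu := t)) = G (x(mu := t))"
  shows "cpd mu F x = cpd mu G x"
  unfolding cpd_def using assms by (auto intro!: pd_cong_line)

text \<open>The functions \<open>\<lambda>_. c\<close> turn scalar multiples into pointwise products, so that
  \<open>algebra_simps\<close> can normalize identities in the bilinear and associative \<open>clmul\<close>.\<close>
lemma clscale_eq_const_times: "clscale c U = (\<lambda>_. c) * U"
  by (simp add: fun_eq_iff clscale_def)

lemma const_fun_mult: "(\<lambda>_::nat set. a * b) = (\<lambda>_. a) * (\<lambda>_. (b::complex))"
  by (simp add: fun_eq_iff)

lemma const_fun_uminus: "(\<lambda>_::nat set. - a) = - (\<lambda>_. (a::complex))"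
  by (simp add: fun_eq_iff)

lemmas clmul_expand = comm_eq clmul_add_left clmul_add_right clmul_diff_left clmul_diff_right
  clmul_neg_left clmul_neg_right clmul_scale_left clmul_scale_right clmul_assoc clscale_simps

lemmas clscale_as_mult = clscale_eq_const_times const_fun_mult const_fun_uminus

lemma comm_scale_right: "comm p q U (clscale c V) = clscale c (comm p q U V)"
  by (simp add: comm_eq clmul_scale_right clmul_scale_left clscale_simps)

lemma comm_jacobi: "comm p q a (comm p q b x) - comm p q b (comm p q a x) = comm p q (comm p q a b) x"
  by (simp add: clmul_expand; (simp add: clscale_as_mult algebra_simps)?)

lemma comm_leibniz: "comm p q (comm p q c a) b + comm p q a (comm p q c b) = comm p q c (comm p q a b)"
  by (simp add: clmul_expand; (simp add: clscale_as_mult algebra_simps)?)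

text \<open>Here \<open>U\<^sub>i\<close>, \<open>X\<^sub>i\<close>, \<open>e\<^sub>i\<close> stand for \<open>C\<^sub>\<mu>, C\<^sub>\<nu>\<close>, \<open>h\<^sub>\<mu>, h\<^sub>\<nu>\<close>, \<open>\<eta>\<^sub>\<mu>\<^sub>\<mu>, \<eta>\<^sub>\<nu>\<^sub>\<nu>\<close>
  and \<open>DU\<^sub>1\<close>, \<open>DU\<^sub>2\<close> for \<open>\<partial>\<^sub>\<mu>C\<^sub>\<nu>\<close>, \<open>\<partial>\<^sub>\<nu>C\<^sub>\<mu>\<close>; the derivatives of \<open>h\<close> are already replaced
  by \<open>[C, h]\<close>.\<close>
lemma curvature_of_shifted_flat_connection:
  assumes flat: "DU\<^sub>1 - DU\<^sub>2 - comm p q U\<^sub>1 U\<^sub>2 = 0"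
  shows "(clscale s (clscale e\<^sub>2 (comm p q U\<^sub>1 X\<^sub>2)) + DU\<^sub>1)
        - (clscale s (clscale e\<^sub>1 (comm p q U\<^sub>2 X\<^sub>1)) + DU\<^sub>2)
        - comm p q (clscale s (clscale e\<^sub>1 X\<^sub>1) + U\<^sub>1) (clscale s (clscale e\<^sub>2 X\<^sub>2) + U\<^sub>2)
      = clscale (- (s * s * e\<^sub>1 * e\<^sub>2)) (comm p q X\<^sub>1 X\<^sub>2)"
proof -
  have "DU\<^sub>1 = DU\<^sub>2 + comm p q U\<^sub>1 U\<^sub>2" using flat by (simp add: algebra_simps)
  then show ?thesis by (simp add: clmul_expand; (simp add: clscale_as_mult algebra_simps)?)
qed

lemma comm_shifted_connection:
  "clscale (- (s * s)) (comm p q U W) - comm p q (clscale s (clscale e X) + U) (clscale (- (s * s)) W)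
   = clscale (s * s * s * e) (comm p q X W)"
  by (simp add: clmul_expand; (simp add: clscale_as_mult algebra_simps)?)

lemma (in clifford_generators) comm_generator_comm_generator:
  assumes a: "a \<in> {1..p+q}" and b: "b \<in> {1..p+q}" and "a \<noteq> b"
  shows "comm p q (g a) (comm p q (g a) (g b)) = clscale (4 * eta p a a) (g b)"
proof -
  have ba: "clmul p q (g b) (g a) = - clmul p q (g a) (g b)"
    using generators_anticommute[OF b a] \<open>a \<noteq> b\<close> by simp
  have aab: "clmul p q (g a) (clmul p q (g a) (g b)) = clscale (eta p a a) (g b)"
    by (simp add: clmul_assoc[symmetric] generator_square[OF a] clmul_scale_left clone_left generator_carrier[OF b])
  have baa: "clmul p q (g b) (clmul p q (g a) (g a)) = clscale (eta p a a) (g b)"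
    by (simp add: generator_square[OF a] clmul_scale_right clone_right generator_carrier[OF b])
  have "clmul p q (g a) (clmul p q (g b) (g a)) = - clscale (eta p a a) (g b)"
    by (simp add: ba clmul_neg_right aab)
  then show ?thesis
    by (simp add: comm_eq clmul_diff_left clmul_diff_right clmul_assoc aab baa)
      (simp add: clscale_def fun_eq_iff algebra_simps)
qed

section \<open>Covariantly constant Clifford field vectors\<close>

definition curvature :: "nat \<Rightarrow> nat \<Rightarrow> (nat \<Rightarrow> point \<Rightarrow> cl) \<Rightarrow> nat \<Rightarrow> nat \<Rightarrow> point \<Rightarrow> cl" where
  "curvature p q A mu nu y = cpd mu (A nu) y - cpd nu (A mu) y - comm p q (A mu y) (A nu y)"

lemma cpd_eq_comm_if_scaled:
  assumes F: "has_cpd mu F y" and "c \<noteq> 0"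
    and "clsub (cpd mu (\<lambda>y. clscale c (F y)) y) (comm p q V (clscale c (F y))) = (\<lambda>A. 0)"
  shows "cpd mu F y = comm p q V (F y)"
proof -
  have "clscale c (cpd mu F y - comm p q V (F y)) = 0"
    using assms(3) by (simp add: cladd_clsub_eq cpd_scale[OF F] comm_scale_right clscale_simps zero_fun_def)
  then show ?thesis using \<open>c \<noteq> 0\<close> by (simp add: clscale_def fun_eq_iff)
qed

locale covariantly_constant_field =
  fixes p q :: nat and h C :: "nat \<Rightarrow> point \<Rightarrow> cl"
  assumes clifford_field_vector: "clifford_field_vector p q h"
    and h_cl_S: "\<And>y mu. y \<in> Rpq p q \<Longrightarrow> mu \<in> {1..p+q} \<Longrightarrow> h mu y \<in> cl_S p q"
    and C_cl_S: "\<And>y mu. y \<in> Rpq p q \<Longrightarrow> mu \<in> {1..p+q} \<Longrightarrow> C mu y \<in> cl_S p q"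
    and h_C2: "\<And>mu. mu \<in> {1..p+q} \<Longrightarrow> C2_cl p q (h mu)"
    and C_C2: "\<And>mu. mu \<in> {1..p+q} \<Longrightarrow> C2_cl p q (C mu)"
    and cpd_h: "\<And>y mu rho. y \<in> Rpq p q \<Longrightarrow> mu \<in> {1..p+q} \<Longrightarrow> rho \<in> {1..p+q} \<Longrightarrow>
        cpd mu (h rho) y = comm p q (C mu y) (h rho y)"
begin

lemma has_cpd_h: "y \<in> Rpq p q \<Longrightarrow> mu \<in> {1..p+q} \<Longrightarrow> rho \<in> {1..p+q} \<Longrightarrow> has_cpd mu (h rho) y"
  using h_C2 by (auto simp: has_cpd_def C2_cl_def C2_scalar_def)

lemma has_cpd_C: "y \<in> Rpq p q \<Longrightarrow> mu \<in> {1..p+q} \<Longrightarrow> rho \<in> {1..p+q} \<Longrightarrow> has_cpd mu (C rho) y"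
  using C_C2 by (auto simp: has_cpd_def C2_cl_def C2_scalar_def)

lemma clifford_generators_at: "y \<in> Rpq p q \<Longrightarrow> clifford_generators p q (\<lambda>rho. h rho y)"
  using clifford_field_vector unfolding clifford_field_vector_def
  by unfold_locales (auto simp: cladd_clsub_eq)

lemma cpd_cpd_h:
  assumes y: "y \<in> Rpq p q" and mu: "mu \<in> {1..p+q}" and nu: "nu \<in> {1..p+q}" and rho: "rho \<in> {1..p+q}"
  shows "cpd nu (cpd mu (h rho)) y =
    comm p q (cpd nu (C mu) y) (h rho y) + comm p q (C mu y) (comm p q (C nu y) (h rho y))"
proof -
  have "cpd nu (cpd mu (h rho)) y = cpd nu (\<lambda>y'. comm p q (C mu y') (h rho y')) y"
    by (rule cpd_cong_line) (rule cpd_h[OF fun_upd_in_Rpq[OF y nu] mu rho])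
  also have "\<dots> = comm p q (cpd nu (C mu) y) (h rho y) + comm p q (C mu y) (cpd nu (h rho) y)"
    by (rule cpd_comm[OF has_cpd_C[OF y nu mu] has_cpd_h[OF y nu rho]])
  finally show ?thesis unfolding cpd_h[OF y nu rho] .
qed

text \<open>The integrability condition of \<open>\<partial>\<^sub>\<mu>h = [C\<^sub>\<mu>, h]\<close>: equality of mixed partials
  and the Jacobi identity.\<close>
lemma comm_curvature_h_eq_0:
  assumes y: "y \<in> Rpq p q" and mu: "mu \<in> {1..p+q}" and nu: "nu \<in> {1..p+q}" and rho: "rho \<in> {1..p+q}"
  shows "comm p q (curvature p q C mu nu y) (h rho y) = 0"
proof -
  let ?h = "h rho y"
  have "cpd nu (cpd mu (h rho)) y = cpd mu (cpd nu (h rho)) y"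
    unfolding cpd_def using pd_commute[OF _ y mu nu] h_C2[OF rho] by (simp add: C2_cl_def)
  then have "comm p q (cpd nu (C mu) y) ?h + comm p q (C mu y) (comm p q (C nu y) ?h) =
      comm p q (cpd mu (C nu) y) ?h + comm p q (C nu y) (comm p q (C mu y) ?h)"
    unfolding cpd_cpd_h[OF y mu nu rho] cpd_cpd_h[OF y nu mu rho] .
  moreover have "comm p q (curvature p q C mu nu y) ?h = comm p q (cpd mu (C nu) y) ?h
      - comm p q (cpd nu (C mu) y) ?h - comm p q (comm p q (C mu y) (C nu y)) ?h"
    unfolding curvature_def by (simp add: clmul_expand; (simp add: clscale_as_mult algebra_simps)?)
  ultimately show ?thesis
    unfolding comm_jacobi[symmetric] by (simp add: algebra_simps)
qed

lemma cpd_C_coeff_eq_0: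
  assumes "y \<in> Rpq p q" "mu \<in> {1..p+q}" and vanishes: "\<And>y'. y' \<in> Rpq p q \<Longrightarrow> C nu y' A = 0"
  shows "cpd mu (C nu) y A = 0"
  unfolding cpd_def using pd_eq_0_if_vanishes[OF assms(1,2), of "\<lambda>y'. C nu y' A"] vanishes by simp

text \<open>Derivatives preserve the vanishing coefficients of \<open>C\<close>; commutators have no scalar part
  and, for odd \<open>n\<close>, no pseudoscalar part.\<close>
lemma curvature_C_in_cl_S:
  assumes y: "y \<in> Rpq p q" and mu: "mu \<in> {1..p+q}" and nu: "nu \<in> {1..p+q}"
  shows "curvature p q C mu nu y \<in> cl_S p q"
proof -
  have coeff: "curvature p q C mu nu y A = 0"
    if "\<And>m y'. m \<in> {1..p+q} \<Longrightarrow> y' \<in> Rpq p q \<Longrightarrow> C m y' A = 0" "comm p q (C mu y) (C nu y) A = 0" for A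
    unfolding curvature_def using that cpd_C_coeff_eq_0[OF y mu, of nu A] cpd_C_coeff_eq_0[OF y nu, of mu A] mu nu
    by simp
  have "curvature p q C mu nu y A = 0" if "\<not> A \<subseteq> {1..p+q}" for A
    using that C_cl_S clmul_carrier
    by (intro coeff) (auto simp: cl_S_def cl_carrier_def comm_eq)
  moreover have "curvature p q C mu nu y {} = 0"
    using C_cl_S comm_Tr_eq_0 by (intro coeff) (auto simp: cl_S_def Tr_def)
  moreover have "curvature p q C mu nu y {1..p+q} = 0" if "odd (p+q)"
    using that C_cl_S comm_top_coeff_eq_0 by (intro coeff) (auto simp: cl_S_def)
  ultimately show ?thesis unfolding cl_S_def cl_carrier_def by auto
qed

lemma curvature_C_eq_0:
  assumes y: "y \<in> Rpq p q" and mu: "mu \<in> {1..p+q}" and nu: "nu \<in> {1..p+q}"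
  shows "curvature p q C mu nu y = 0"
proof (rule cl_S_commuting_with_generators_eq_0[OF clifford_generators_at[OF y] curvature_C_in_cl_S[OF y mu nu]])
  fix a assume "a \<in> {1..p+q}"
  then have "comm p q (curvature p q C mu nu y) (h a y) = 0"
    by (rule comm_curvature_h_eq_0[OF y mu nu])
  then show "clmul p q (h a y) (curvature p q C mu nu y) = clmul p q (curvature p q C mu nu y) (h a y)"
    by (simp add: comm_eq)
qed

context
  fixes \<sigma> :: complex and B :: "nat \<Rightarrow> point \<Rightarrow> cl"
  assumes B_eq: "\<And>mu y. B mu y = clscale \<sigma> (clscale (eta p mu mu) (h mu y)) + C mu y"
begin

lemma B_in_cl_S: "y \<in> Rpq p q \<Longrightarrow> mu \<in> {1..p+q} \<Longrightarrow> B mu y \<in> cl_S p q"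
  using h_cl_S C_cl_S by (auto simp: B_eq cl_S_def cl_carrier_def clscale_def)

lemma curvature_B:
  assumes y: "y \<in> Rpq p q" and mu: "mu \<in> {1..p+q}" and nu: "nu \<in> {1..p+q}"
  shows "curvature p q B mu nu y = clscale (- (\<sigma> * \<sigma> * eta p mu mu * eta p nu nu)) (comm p q (h mu y) (h nu y))"
proof -
  have cpd_B: "cpd a (B b) y = clscale \<sigma> (clscale (eta p b b) (comm p q (C a y) (h b y))) + cpd a (C b) y"
    if a: "a \<in> {1..p+q}" and b: "b \<in> {1..p+q}" for a b
  proof -
    have "B b = (\<lambda>y. clscale \<sigma> (clscale (eta p b b) (h b y)) + C b y)"
      using B_eq by blast
    then show ?thesis
      by (simp add: cpd_add has_cpd_scale has_cpd_h[OF y a b] has_cpd_C[OF y a b] cpd_scale cpd_h[OF y a b])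
  qed
  have "cpd mu (C nu) y - cpd nu (C mu) y - comm p q (C mu y) (C nu y) = 0"
    using curvature_C_eq_0[OF y mu nu] by (simp add: curvature_def)
  then show ?thesis
    unfolding curvature_def cpd_B[OF mu nu] cpd_B[OF nu mu] B_eq
    by (rule curvature_of_shifted_flat_connection)
qed

lemma curvature_B_raised:
  assumes y: "y \<in> Rpq p q" and mu: "mu \<in> {1..p+q}" and nu: "nu \<in> {1..p+q}"
  shows "clscale (eta p mu mu * eta p nu nu) (curvature p q B mu nu y) = clscale (- (\<sigma> * \<sigma>)) (comm p q (h mu y) (h nu y))"
proof -
  have "(eta p mu mu * eta p nu nu) * (- (\<sigma> * \<sigma> * eta p mu mu * eta p nu nu)) =
      (eta p mu mu * eta p mu mu) * (eta p nu nu * eta p nu nu) * (- (\<sigma> * \<sigma>))"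
    by (simp add: mult_ac)
  then show ?thesis by (simp add: curvature_B[OF y mu nu] clscale_simps eta_diag_square)
qed

lemma cpd_curvature_B_raised:
  assumes x: "x \<in> Rpq p q" and mu: "mu \<in> {1..p+q}" and nu: "nu \<in> {1..p+q}"
  shows "cpd mu (\<lambda>y. clscale (eta p mu mu * eta p nu nu) (curvature p q B mu nu y)) x =
    clscale (- (\<sigma> * \<sigma>)) (comm p q (C mu x) (comm p q (h mu x) (h nu x)))"
proof -
  have "cpd mu (\<lambda>y. clscale (eta p mu mu * eta p nu nu) (curvature p q B mu nu y)) x =
      cpd mu (\<lambda>y. clscale (- (\<sigma> * \<sigma>)) (comm p q (h mu y) (h nu y))) x"
    by (rule cpd_cong_line) (rule curvature_B_raised[OF fun_upd_in_Rpq[OF x mu] mu nu])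
  also have "\<dots> = clscale (- (\<sigma> * \<sigma>)) (comm p q (comm p q (C mu x) (h mu x)) (h nu x)
      + comm p q (h mu x) (comm p q (C mu x) (h nu x)))"
    unfolding cpd_scale[OF has_cpd_comm[OF has_cpd_h[OF x mu mu] has_cpd_h[OF x mu nu]]]
      cpd_comm[OF has_cpd_h[OF x mu mu] has_cpd_h[OF x mu nu]] cpd_h[OF x mu mu] cpd_h[OF x mu nu] ..
  also have "\<dots> = clscale (- (\<sigma> * \<sigma>)) (comm p q (C mu x) (comm p q (h mu x) (h nu x)))"
    by (simp add: comm_leibniz)
  finally show ?thesis .
qed

lemma covariant_divergence_term:
  assumes x: "x \<in> Rpq p q" and mu: "mu \<in> {1..p+q}" and nu: "nu \<in> {1..p+q}"
  shows "cpd mu (\<lambda>y. clscale (eta p mu mu * eta p nu nu) (curvature p q B mu nu y)) x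
      - comm p q (B mu x) (clscale (eta p mu mu * eta p nu nu) (curvature p q B mu nu x))
    = (if mu = nu then 0 else clscale (4 * \<sigma> ^ 3) (h nu x))"
proof -
  interpret clifford_generators p q "\<lambda>rho. h rho x" by (rule clifford_generators_at[OF x])
  have summand: "cpd mu (\<lambda>y. clscale (eta p mu mu * eta p nu nu) (curvature p q B mu nu y)) x
      - comm p q (B mu x) (clscale (eta p mu mu * eta p nu nu) (curvature p q B mu nu x)) =
      clscale (\<sigma> * \<sigma> * \<sigma> * eta p mu mu) (comm p q (h mu x) (comm p q (h mu x) (h nu x)))"
    unfolding cpd_curvature_B_raised[OF x mu nu] curvature_B_raised[OF x mu nu] B_eq[of mu x]
    by (rule comm_shifted_connection)
  show ?thesis
  proof (cases "mu = nu")
    case True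
    then show ?thesis unfolding summand by (simp add: comm_eq clscale_simps)
  next
    case False
    have "(\<sigma> * \<sigma> * \<sigma> * eta p mu mu) * (4 * eta p mu mu) = 4 * \<sigma> ^ 3"
      using eta_diag_square[of p mu] by (simp add: power3_eq_cube algebra_simps)
    then show ?thesis
      unfolding summand comm_generator_comm_generator[OF mu nu False] clscale_simps(1) using False by simp
  qed
qed

lemma yang_mills_current:
  assumes x: "x \<in> Rpq p q" and nu: "nu \<in> {1..p+q}"
  shows "(\<lambda>A. \<Sum>mu\<in>{1..p+q}. (cpd mu (\<lambda>y. clscale (eta p mu mu * eta p nu nu) (curvature p q B mu nu y)) x
      - comm p q (B mu x) (clscale (eta p mu mu * eta p nu nu) (curvature p q B mu nu x))) A)
    = clscale (4 * (of_nat (p+q) - 1) * \<sigma> ^ 3) (h nu x)"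
proof (rule ext)
  fix A
  let ?term = "\<lambda>mu. (if mu = nu then 0 else clscale (4 * \<sigma> ^ 3) (h nu x)) A"
  have "(\<Sum>mu\<in>{1..p+q}. (cpd mu (\<lambda>y. clscale (eta p mu mu * eta p nu nu) (curvature p q B mu nu y)) x
      - comm p q (B mu x) (clscale (eta p mu mu * eta p nu nu) (curvature p q B mu nu x))) A) =
      (\<Sum>mu\<in>{1..p+q}. ?term mu)"
    by (intro sum.cong refl) (simp only: covariant_divergence_term[OF x _ nu])
  also have "\<dots> = ?term nu + (\<Sum>mu\<in>{1..p+q} - {nu}. ?term mu)"
    by (rule sum.remove) (use nu in auto)
  also have "\<dots> = (\<Sum>mu\<in>{1..p+q} - {nu}. 4 * \<sigma> ^ 3 * h nu x A)"
    by (simp add: clscale_def)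
  also have "\<dots> = of_nat (p + q - 1) * (4 * \<sigma> ^ 3 * h nu x A)"
    using nu by simp
  also have "\<dots> = clscale (4 * (of_nat (p+q) - 1) * \<sigma> ^ 3) (h nu x) A"
    using nu by (simp add: of_nat_diff clscale_def)
  finally show "(\<Sum>mu\<in>{1..p+q}. (cpd mu (\<lambda>y. clscale (eta p mu mu * eta p nu nu) (curvature p q B mu nu y)) x
      - comm p q (B mu x) (clscale (eta p mu mu * eta p nu nu) (curvature p q B mu nu x))) A) =
      clscale (4 * (of_nat (p+q) - 1) * \<sigma> ^ 3) (h nu x) A" .
qed

end

end

theorem theorem9:
  fixes p q :: nat
    and h C B G :: "nat \<Rightarrow> point \<Rightarrow> cl"
    and G_up :: "nat \<Rightarrow> nat \<Rightarrow> point \<Rightarrow> cl"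
    and G_low :: "nat \<Rightarrow> nat \<Rightarrow> point \<Rightarrow> cl"
    and \<sigma> \<epsilon> :: complex
  assumes cfv: "clifford_field_vector p q h"
    and h_S: "\<forall>x\<in>Rpq p q. \<forall>mu\<in>{1..p+q}. h mu x \<in> cl_S p q"
    and C_S: "\<forall>x\<in>Rpq p q. \<forall>mu\<in>{1..p+q}. C mu x \<in> cl_S p q"
    and h_C2: "\<forall>mu\<in>{1..p+q}. C2_cl p q (h mu)"
    and C_C2: "\<forall>mu\<in>{1..p+q}. C2_cl p q (C mu)"
    and eq: "\<forall>x\<in>Rpq p q. \<forall>mu\<in>{1..p+q}. \<forall>rho\<in>{1..p+q}.
               clsub (cpd mu (\<lambda>y. clscale (eta p rho rho) (h rho y)) x)
                     (comm p q (C mu x) (clscale (eta p rho rho) (h rho x))) = (\<lambda>A. 0)"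
    and eps: "\<epsilon> = 4 * (of_nat (p+q) - 1) * \<sigma> ^ 3"
    and B_def: "\<forall>mu y. B mu y = cladd (clscale \<sigma> (clscale (eta p mu mu) (h mu y))) (C mu y)"
    and G_def: "\<forall>mu nu y. G_low mu nu y =
                  clsub (clsub (cpd mu (B nu) y) (cpd nu (B mu) y)) (comm p q (B mu y) (B nu y))"
    and Gup_def: "\<forall>mu nu y. G_up mu nu y = clscale (eta p mu mu * eta p nu nu) (G_low mu nu y)"
  shows "(\<forall>x\<in>Rpq p q. \<forall>mu\<in>{1..p+q}. B mu x \<in> cl_S p q) \<and>
         (\<forall>x\<in>Rpq p q. \<forall>mu\<in>{1..p+q}. \<forall>nu\<in>{1..p+q}.
            clsub (clsub (cpd mu (B nu) x) (cpd nu (B mu) x)) (comm p q (B mu x) (B nu x))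
              = G_low mu nu x) \<and>
         (\<forall>x\<in>Rpq p q. \<forall>nu\<in>{1..p+q}.
            (\<lambda>A. \<Sum>mu\<in>{1..p+q}.
                clsub (cpd mu (G_up mu nu) x) (comm p q (B mu x) (G_up mu nu x)) A)
              = clscale \<epsilon> (h nu x))"
proof -
  have cpd_h: "cpd mu (h rho) y = comm p q (C mu y) (h rho y)"
    if "y \<in> Rpq p q" "mu \<in> {1..p+q}" "rho \<in> {1..p+q}" for y mu rho
    by (rule cpd_eq_comm_if_scaled[OF _ eta_diag_nonzero[of p rho]])
      (use that eq h_C2 in \<open>auto simp: has_cpd_def C2_cl_def C2_scalar_def\<close>)
  interpret covariantly_constant_field p q h C
    by unfold_locales (use cfv h_S C_S h_C2 C_C2 cpd_h in auto)
  have B: "B mu y = clscale \<sigma> (clscale (eta p mu mu) (h mu y)) + C mu y" for mu y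
    using B_def by (simp add: cladd_clsub_eq)
  have "G_low = curvature p q B"
    using G_def by (simp add: fun_eq_iff curvature_def cladd_clsub_eq)
  then have "G_up mu nu = (\<lambda>y. clscale (eta p mu mu * eta p nu nu) (curvature p q B mu nu y))" for mu nu
    using Gup_def by auto
  then show ?thesis
    using B_in_cl_S[OF B] yang_mills_current[OF B] G_def eps by (simp add: cladd_clsub_eq)
qed

end
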